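(* Let $(E,\mathsf{E},\mu)$ and $(\Omega,\mathsf{F},\mathbb{P})$ be probability spaces, with $(E,\mathsf{E},\mu)$ complete, and let $X$ be a separable Hadamard space. Let $f:E\times X\to(-\infty,+\infty]$ be a normal convex integrand such that $\underline{f}(x):=\int f(e,x)\,d\mu(e)$ is proper and $\mathrm{argmin}\,\underline{f}\neq\emptyset$. Let $x_0\in X$, let $(\lambda_n)$ be positive reals with $\sum_n\lambda_n=\infty$, $\sum_n\lambda_n^2<\infty$, let $(\xi_{n+1})_{n\in\mathbb{N}}$ be i.i.d.\ random variables $\Omega\to E$ with distribution $\mu$, and let $x_{n+1}:=\mathrm{prox}^f_{\lambda_n}(\xi_{n+1},x_n)$. Assume there is a positive $L\in L^2(E,\mu)$ with $f(e,x)-f(e,y)\le L(e)d(x,y)$ for all $x,y\in X$ and $\mu$-almost all $e$, and set $\underline{L}:=\int L^2\,d\mu$. Let $\mathsf{F}_n:=\sigma(\xi_1,\dots,\xi_n)$ and $\mathbb{E}_n:=\mathbb{E}[\cdot\mid\mathsf{F}_n]$. Then for every $n\in\mathbb{N}$ and every $X$-valued $\mathsf{F}_n$-measurable random variable $y$, \[\mathbb{E}_n[d^2(x_{n+1},y)]\le d^2(x_n,y)-2\lambda_n(\underline{f}(x_n)-\underline{f}(y))+4\lambda_n^2\underline{L}\quad\text{a.s.}\] In particular, if additionally $y\in\mathrm{argmin}\,\underline{f}$ a.s., then $\mathbb{E}_n[d^2(x_{n+1},y)]\le d^2(x_n,y)-2\lambda_n(\underline{f}(x_n)-\min\underline{f})+4\lambda_n^2\underline{L}$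 a.s.
   Context: A Hadamard space is a complete geodesic metric space $(X,d)$ satisfying, for all $x\in X$, $t\in[0,1]$ and geodesics $\gamma:[0,l]\to X$, $d^2(\gamma(tl),x)\le(1-t)d^2(\gamma(0),x)+td^2(\gamma(l),x)-t(1-t)d^2(\gamma(0),\gamma(l))$. A function is convex if its composition with every geodesic is convex. A normal convex integrand is a $\mathsf{E}\otimes\mathsf{B}(X)$-measurable $f:E\times X\to(-\infty,+\infty]$ with each $f(e,\cdot)$ proper, lower semicontinuous and convex. $\mathrm{prox}^f_\lambda(e,x):=\mathrm{argmin}_{y\in X}\{f(e,y)+\frac1{2\lambda}d^2(x,y)\}$. *)

theory Defs
  imports "HOL-Analysis.Analysis" "HOL-Probability.Probability"
begin

definition geodesic :: "(real \<Rightarrow> 'a::metric_space) \<Rightarrow> real \<Rightarrow> bool" where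
  "geodesic \<gamma> l \<longleftrightarrow> 0 \<le> l \<and> (\<forall>s\<in>{0..l}. \<forall>t\<in>{0..l}. dist (\<gamma> s) (\<gamma> t) = \<bar>s - t\<bar>)"

definition hadamard_space :: "'a::metric_space itself \<Rightarrow> bool" where
  "hadamard_space _ \<longleftrightarrow>
     Topological_Spaces.complete (UNIV :: 'a set) \<and>
     (\<forall>x y :: 'a. \<exists>\<gamma>. geodesic \<gamma> (dist x y) \<and> \<gamma> 0 = x \<and> \<gamma> (dist x y) = y) \<and>
     (\<forall>(x::'a) \<gamma> l t. geodesic \<gamma> l \<and> t \<in> {0..1} \<longrightarrow>
        (dist (\<gamma> (t * l)) x)\<^sup>2 \<le> (1 - t) * (dist (\<gamma> 0) x)\<^sup>2 + t * (dist (\<gamma> l) x)\<^sup>2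
                                  - t * (1 - t) * (dist (\<gamma> 0) (\<gamma> l))\<^sup>2)"

definition separable_space :: "'a::topological_space itself \<Rightarrow> bool" where
  "separable_space _ \<longleftrightarrow> (\<exists>D :: 'a set. countable D \<and> closure D = UNIV)"

text \<open>Functions with values in (-\<infinity>,+\<infinity>] are modelled as ereal-valued functions never equal to -\<infinity>.\<close>
definition proper_fun :: "('a \<Rightarrow> ereal) \<Rightarrow> bool" where
  "proper_fun g \<longleftrightarrow> (\<forall>x. g x \<noteq> -\<infinity>) \<and> (\<exists>x. g x \<noteq> \<infinity>)"

definition lsc_fun :: "('a::topological_space \<Rightarrow> ereal) \<Rightarrow> bool" where
  "lsc_fun g \<longleftrightarrow> (\<forall>c. closed {x. g x \<le> c})"

definition geodesically_convex :: "('a::metric_space \<Rightarrow> ereal) \<Rightarrow> bool" where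
  "geodesically_convex g \<longleftrightarrow>
     (\<forall>\<gamma> l. geodesic \<gamma> l \<longrightarrow>
        (\<forall>a\<in>{0..l}. \<forall>b\<in>{0..l}. \<forall>t\<in>{0..1}.
           g (\<gamma> ((1 - t) * a + t * b)) \<le> ereal (1 - t) * g (\<gamma> a) + ereal t * g (\<gamma> b)))"

definition normal_convex_integrand :: "'e measure \<Rightarrow> ('e \<Rightarrow> 'a::metric_space \<Rightarrow> ereal) \<Rightarrow> bool" where
  "normal_convex_integrand M f \<longleftrightarrow>
     (\<lambda>(e, x). f e x) \<in> borel_measurable (M \<Otimes>\<^sub>M (borel :: 'a measure)) \<and>
     (\<forall>e\<in>space M. proper_fun (f e) \<and> lsc_fun (f e) \<and> geodesically_convex (f e))"

text \<open>Integral of an extended-real function, with the convention (+\<infinity>) - (+\<infinity>) = +\<infinity>.\<close>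
definition ext_integral :: "'e measure \<Rightarrow> ('e \<Rightarrow> ereal) \<Rightarrow> ereal" where
  "ext_integral M h =
     (let P = (\<integral>\<^sup>+ e. e2ennreal (h e) \<partial>M);
          N = (\<integral>\<^sup>+ e. e2ennreal (- h e) \<partial>M)
      in if P = \<infinity> then \<infinity> else enn2ereal P - enn2ereal N)"

definition argmin_set :: "('a \<Rightarrow> ereal) \<Rightarrow> 'a set" where
  "argmin_set g = {z. \<forall>y. g z \<le> g y}"

definition prox :: "('e \<Rightarrow> 'a::metric_space \<Rightarrow> ereal) \<Rightarrow> real \<Rightarrow> 'e \<Rightarrow> 'a \<Rightarrow> 'a set" where
  "prox f lam e x = argmin_set (\<lambda>y. f e y + ereal ((dist x y)\<^sup>2 / (2 * lam)))"

definition nat_filtration :: "'w measure \<Rightarrow> 'e measure \<Rightarrow> (nat \<Rightarrow> 'w \<Rightarrow> 'e) \<Rightarrow> nat \<Rightarrow> 'w measure" where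
  "nat_filtration P M \<xi> n =
     sigma (space P) (\<Union>i\<in>{1..n}. {\<xi> i -` A \<inter> space P | A. A \<in> sets M})"

end

(*
  In a Hadamard space the resolvent p of a convex function g at a (the minimiser of
  g + d(a,.)^2/(2 lam)) satisfies the variational inequality
    d(p,v)^2 <= d(a,v)^2 - d(a,p)^2 - 2 lam (g p - g v),
  obtained by comparing p with the points of the geodesic from p to v.  For g = f(xi_(n+1), .),
  which is L(xi_(n+1))-Lipschitz, absorbing d(a,p) gives the pointwise estimate
    d(x_(n+1), y)^2 <= d(x_n, y)^2 - 2 lam (f(xi_(n+1), x_n) - f(xi_(n+1), y)) + 4 lam^2 L(xi_(n+1))^2.
  As xi_(n+1) is independent of F_n while x_n and y are F_n-measurable, taking conditional
  expectations amounts to integrating the right-hand side over e with x_n and y frozen.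
  The remaining work is measurability.  x_n is F_n-measurable because the resolvent depends
  continuously on its base point and, off a null set that completeness makes harmless,
  membership of the resolvent in a ball is decided by countably many infima of the continuous
  objective over a dense set; separability also makes dist measurable on borel x borel.
*)
theory Submission
  imports Defs
begin

section \<open>Resolvents in Hadamard spaces\<close>

definition resolvent :: "('a::metric_space \<Rightarrow> ereal) \<Rightarrow> real \<Rightarrow> 'a \<Rightarrow> 'a set" where
  "resolvent g lam a = argmin_set (\<lambda>v. g v + ereal ((dist a v)\<^sup>2 / (2 * lam)))"

lemma prox_eq_resolvent: "prox f lam e a = resolvent (f e) lam a"
  by (simp add: prox_def resolvent_def)

lemma resolvent_minimal:
  "p \<in> resolvent g lam a \<Longrightarrow> g p + ereal ((dist a p)\<^sup>2 / (2 * lam)) \<le> g v + ereal ((dist a v)\<^sup>2 / (2 * lam))"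
  by (simp add: resolvent_def argmin_set_def)

lemma hadamard_space_geodesic:
  assumes "hadamard_space TYPE('x::metric_space)"
  obtains \<gamma> where "geodesic \<gamma> (dist x y)" "\<gamma> 0 = x" "\<gamma> (dist x y) = (y::'x)"
  using assms unfolding hadamard_space_def by blast

lemma hadamard_space_CAT0:
  assumes "hadamard_space TYPE('x::metric_space)" "geodesic \<gamma> l" "0 \<le> t" "t \<le> 1"
  shows "(dist (\<gamma> (t * l)) (z::'x))\<^sup>2
           \<le> (1 - t) * (dist (\<gamma> 0) z)\<^sup>2 + t * (dist (\<gamma> l) z)\<^sup>2 - t * (1 - t) * (dist (\<gamma> 0) (\<gamma> l))\<^sup>2"
  using assms unfolding hadamard_space_def by auto

lemma geodesic_dist_ends: "geodesic \<gamma> l \<Longrightarrow> dist (\<gamma> 0) (\<gamma> l) = l"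
  unfolding geodesic_def by auto

lemma geodesically_convexD:
  assumes "geodesically_convex g" "geodesic \<gamma> l" "0 \<le> t" "t \<le> 1"
  shows "g (\<gamma> (t * l)) \<le> ereal (1 - t) * g (\<gamma> 0) + ereal t * g (\<gamma> l)"
proof -
  have "0 \<le> l" using assms(2) by (simp add: geodesic_def)
  then show ?thesis
    using assms unfolding geodesically_convex_def by (metis atLeastAtMost_iff mult_zero_right add_0 order_refl)
qed

lemma nonpos_if_le_small_multiples:
  fixes c l :: real
  assumes "\<And>t. 0 < t \<Longrightarrow> t \<le> 1 \<Longrightarrow> c \<le> t * l"
  shows "c \<le> 0"
proof (rule ccontr)
  assume "\<not> c \<le> 0"
  then have c: "c > 0" by simp
  with assms[of 1] have l: "l > 0" by simp
  define t where "t = min 1 (c / (2 * l))"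
  have t: "0 < t" "t \<le> 1" using c l by (auto simp: t_def)
  have "c \<le> t * l" using assms t by simp
  also have "\<dots> \<le> c / (2 * l) * l" using l by (intro mult_right_mono) (auto simp: t_def)
  also have "\<dots> = c / 2" using l by simp
  finally show False using c by simp
qed

text \<open>Comparing the minimality of \<open>p\<close> with the points \<open>\<gamma> (t * l)\<close> of the geodesic from \<open>p\<close>
  to \<open>v\<close>, convexity of \<open>g\<close> and the CAT(0) inequality leave an error of order \<open>t * l\<^sup>2\<close>,
  which vanishes as \<open>t \<rightarrow> 0\<close>.\<close>
lemma resolvent_variational_ineq:
  fixes g :: "'x::metric_space \<Rightarrow> ereal"
  assumes H: "hadamard_space TYPE('x)" and cvx: "geodesically_convex g" and lam: "lam > 0"
    and p: "p \<in> resolvent g lam a" and gp: "g p = ereal Gp" and gv: "g v = ereal Gv"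
  shows "(dist p v)\<^sup>2 \<le> (dist a v)\<^sup>2 - (dist a p)\<^sup>2 - 2 * lam * (Gp - Gv)"
proof -
  define l where "l = dist p v"
  obtain \<gamma> where geo: "geodesic \<gamma> l" "\<gamma> 0 = p" "\<gamma> l = v"
    using hadamard_space_geodesic[OF H] unfolding l_def by blast
  have "2 * lam * Gp + (dist a p)\<^sup>2 - (2 * lam * Gv + (dist a v)\<^sup>2) + l\<^sup>2 \<le> t * l\<^sup>2"
    if t: "0 < t" "t \<le> 1" for t
  proof -
    define z where "z = \<gamma> (t * l)"
    have "g z \<le> ereal ((1 - t) * Gp + t * Gv)"
      using geodesically_convexD[OF cvx geo(1)] t geo gp gv by (simp add: z_def)
    moreover have "ereal (Gp + (dist a p)\<^sup>2 / (2 * lam)) \<le> g z + ereal ((dist a z)\<^sup>2 / (2 * lam))"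
      using resolvent_minimal[OF p, of z] gp by simp
    ultimately obtain Gz where Gz: "g z = ereal Gz" by (cases "g z") auto
    have conv: "Gz \<le> (1 - t) * Gp + t * Gv"
      using \<open>g z \<le> _\<close> Gz by simp
    have "Gp + (dist a p)\<^sup>2 / (2 * lam) \<le> Gz + (dist a z)\<^sup>2 / (2 * lam)"
      using \<open>ereal _ \<le> _\<close> Gz by simp
    from mult_left_mono[OF this, of "2 * lam"]
    have minim: "2 * lam * Gp + (dist a p)\<^sup>2 \<le> 2 * lam * Gz + (dist a z)\<^sup>2"
      using lam by (simp add: distrib_left)
    have cat: "(dist z a)\<^sup>2 \<le> (1 - t) * (dist p a)\<^sup>2 + t * (dist v a)\<^sup>2 - t * (1 - t) * l\<^sup>2"
      using hadamard_space_CAT0[OF H geo(1), of t a] t geo geodesic_dist_ends[OF geo(1)]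
      by (simp add: z_def)
    have "2 * lam * Gz \<le> 2 * lam * ((1 - t) * Gp + t * Gv)"
      using conv lam by (intro mult_left_mono) auto
    with minim cat have "2 * lam * Gp + (dist a p)\<^sup>2
        \<le> 2 * lam * ((1 - t) * Gp + t * Gv) + ((1 - t) * (dist a p)\<^sup>2 + t * (dist a v)\<^sup>2 - t * (1 - t) * l\<^sup>2)"
      by (simp add: dist_commute)
    then have "t * (2 * lam * Gp + (dist a p)\<^sup>2) \<le> t * (2 * lam * Gv + (dist a v)\<^sup>2 - (1 - t) * l\<^sup>2)"
      by (simp add: algebra_simps)
    then have "2 * lam * Gp + (dist a p)\<^sup>2 \<le> 2 * lam * Gv + (dist a v)\<^sup>2 - (1 - t) * l\<^sup>2"
      using t by simp
    then show ?thesis by (simp add: algebra_simps)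
  qed
  then have "2 * lam * Gp + (dist a p)\<^sup>2 - (2 * lam * Gv + (dist a v)\<^sup>2) + l\<^sup>2 \<le> 0"
    by (rule nonpos_if_le_small_multiples)
  then show ?thesis by (simp add: l_def algebra_simps)
qed

lemma resolvent_value_finite:
  assumes "proper_fun g" "p \<in> resolvent g lam a"
  shows "g p = ereal (real_of_ereal (g p))"
proof -
  obtain v where "g v \<noteq> \<infinity>" using assms(1) unfolding proper_fun_def by blast
  with resolvent_minimal[OF assms(2), of v] have "g p \<noteq> \<infinity>" by auto
  moreover have "g p \<noteq> -\<infinity>" using assms(1) unfolding proper_fun_def by blast
  ultimately show ?thesis by (cases "g p") auto
qed

lemma resolvent_quadratic_growth:
  fixes g :: "'x::metric_space \<Rightarrow> ereal"
  assumes H: "hadamard_space TYPE('x)" and cvx: "geodesically_convex g" and pr: "proper_fun g"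
    and lam: "lam > 0" and p: "p \<in> resolvent g lam a"
  shows "ereal (real_of_ereal (g p) + (dist a p)\<^sup>2 / (2 * lam) + (dist p v)\<^sup>2 / (2 * lam))
           \<le> g v + ereal ((dist a v)\<^sup>2 / (2 * lam))"
proof (cases "g v")
  case (real Gv)
  have "(dist p v)\<^sup>2 \<le> (dist a v)\<^sup>2 - (dist a p)\<^sup>2 - 2 * lam * (real_of_ereal (g p) - Gv)"
    by (rule resolvent_variational_ineq[OF H cvx lam p resolvent_value_finite[OF pr p] real])
  then have "((dist a p)\<^sup>2 + (dist p v)\<^sup>2) / (2 * lam) \<le> ((dist a v)\<^sup>2 - 2 * lam * (real_of_ereal (g p) - Gv)) / (2 * lam)"
    using lam by (intro divide_right_mono) auto
  also have "\<dots> = (dist a v)\<^sup>2 / (2 * lam) - (real_of_ereal (g p) - Gv)"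
    using lam by (simp add: field_simps)
  finally show ?thesis using real by (simp add: add_divide_distrib)
next
  case MInf
  with pr show ?thesis by (simp add: proper_fun_def)
qed simp

lemma lipschitz_proper_finite:
  assumes pr: "proper_fun g" and lip: "\<forall>u v. g u - g v \<le> ereal (K * dist u v)"
  shows "g u = ereal (real_of_ereal (g u))"
proof -
  obtain v where v: "g v \<noteq> \<infinity>" using pr unfolding proper_fun_def by blast
  have "g v \<noteq> -\<infinity>" "g u \<noteq> -\<infinity>" using pr unfolding proper_fun_def by auto
  with v lip[rule_format, of u v] have "g u \<noteq> \<infinity>" by (cases "g v") auto
  with \<open>g u \<noteq> -\<infinity>\<close> show ?thesis by (cases "g u") auto
qed

lemma lipschitz_real_of_ereal:
  assumes pr: "proper_fun g" and lip: "\<forall>u v. g u - g v \<le> ereal (K * dist u v)"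
  shows "real_of_ereal (g u) - real_of_ereal (g v) \<le> K * dist u v"
  using lip[rule_format, of u v] lipschitz_proper_finite[OF pr lip, of u] lipschitz_proper_finite[OF pr lip, of v]
  by (metis ereal_minus(1) ereal_less_eq(3))

lemma lipschitz_real_of_ereal_abs:
  assumes "proper_fun g" and "\<forall>u v. g u - g v \<le> ereal (K * dist u v)"
  shows "\<bar>real_of_ereal (g u) - real_of_ereal (g v)\<bar> \<le> K * dist u v"
  using lipschitz_real_of_ereal[OF assms, of u v] lipschitz_real_of_ereal[OF assms, of v u]
  by (simp add: dist_commute abs_le_iff)

lemma continuous_on_real_of_ereal_lipschitz:
  assumes "proper_fun g" and "\<forall>u v. g u - g v \<le> ereal (K * dist u v)" and "K \<ge> 0"
  shows "continuous_on UNIV (\<lambda>v. real_of_ereal (g v))"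
  by (rule lipschitz_on_continuous_on[of K])
     (use lipschitz_real_of_ereal_abs[OF assms(1,2)] assms(3) in \<open>auto simp: lipschitz_on_def dist_real_def\<close>)

lemma resolvent_dist_estimate:
  fixes g :: "'x::metric_space \<Rightarrow> ereal"
  assumes H: "hadamard_space TYPE('x)" and cvx: "geodesically_convex g" and pr: "proper_fun g"
    and lam: "lam > 0" and p: "p \<in> resolvent g lam a"
    and lip: "\<forall>u v. g u - g v \<le> ereal (K * dist u v)"
  shows "(dist p b)\<^sup>2 \<le> (dist a b)\<^sup>2 - 2 * lam * (real_of_ereal (g a) - real_of_ereal (g b)) + lam\<^sup>2 * K\<^sup>2"
proof -
  define G where "G u = real_of_ereal (g u)" for u
  have fin: "g u = ereal (G u)" for u unfolding G_def by (rule lipschitz_proper_finite[OF pr lip])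
  have vi: "(dist p b)\<^sup>2 \<le> (dist a b)\<^sup>2 - (dist a p)\<^sup>2 - 2 * lam * (G p - G b)"
    by (rule resolvent_variational_ineq[OF H cvx lam p fin fin])
  have "2 * lam * (G a - G p) \<le> 2 * lam * (K * dist a p)"
    using lipschitz_real_of_ereal[OF pr lip, of a p] lam unfolding G_def by (intro mult_left_mono) auto
  moreover have "2 * lam * (K * dist a p) - (dist a p)\<^sup>2 \<le> lam\<^sup>2 * K\<^sup>2"
    using zero_le_power2[of "lam * K - dist a p"] by (simp add: power2_diff power_mult_distrib)
  ultimately show ?thesis using vi by (simp add: G_def algebra_simps)
qed

lemma power2_diff_le_mult_sum:
  fixes x y d :: real
  assumes "0 \<le> x" "0 \<le> y" "x - y \<le> d"
  shows "x\<^sup>2 - y\<^sup>2 \<le> d * (x + y)"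
proof -
  have "x\<^sup>2 - y\<^sup>2 = (x - y) * (x + y)" by (simp add: power2_eq_square algebra_simps)
  also have "\<dots> \<le> d * (x + y)" using assms by (intro mult_right_mono) auto
  finally show ?thesis .
qed

text \<open>Adding the variational inequalities at \<open>p\<^sub>1\<close> and \<open>p\<^sub>2\<close> cancels the values of \<open>g\<close> and
  yields \<open>d(p\<^sub>1,p\<^sub>2)\<^sup>2 \<le> d(a\<^sub>1,a\<^sub>2) (2 d(a\<^sub>1,p\<^sub>1) + d(p\<^sub>1,p\<^sub>2) + d(a\<^sub>1,a\<^sub>2))\<close>.\<close>
lemma resolvent_continuity:
  fixes g :: "'x::metric_space \<Rightarrow> ereal"
  assumes H: "hadamard_space TYPE('x)" and cvx: "geodesically_convex g" and pr: "proper_fun g"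
    and lam: "lam > 0" and p1: "p1 \<in> resolvent g lam a1" and eps: "\<epsilon> > 0"
  obtains \<eta> where "\<eta> > 0" "\<And>a2 p2. p2 \<in> resolvent g lam a2 \<Longrightarrow> dist a1 a2 < \<eta> \<Longrightarrow> dist p1 p2 < \<epsilon>"
proof -
  define c where "c = dist a1 p1"
  define \<eta> where "\<eta> = min 1 (min (\<epsilon> / 2) (\<epsilon>\<^sup>2 / (2 * (2 * c + 1))))"
  have c: "2 * c + 1 > 0" by (simp add: c_def add_nonneg_pos)
  then have "\<eta> > 0" using eps by (simp add: \<eta>_def)
  moreover have "dist p1 p2 < \<epsilon>" if p2: "p2 \<in> resolvent g lam a2" and a2: "dist a1 a2 < \<eta>" for a2 p2
  proof (rule ccontr)
    assume "\<not> dist p1 p2 < \<epsilon>"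
    define \<delta> where "\<delta> = dist a1 a2"
    define D where "D = dist p1 p2"
    note g1 = resolvent_value_finite[OF pr p1] and g2 = resolvent_value_finite[OF pr p2]
    have v1: "D\<^sup>2 \<le> (dist a1 p2)\<^sup>2 - (dist a1 p1)\<^sup>2 - 2 * lam * (real_of_ereal (g p1) - real_of_ereal (g p2))"
      unfolding D_def by (rule resolvent_variational_ineq[OF H cvx lam p1 g1 g2])
    have v2: "D\<^sup>2 \<le> (dist a2 p1)\<^sup>2 - (dist a2 p2)\<^sup>2 - 2 * lam * (real_of_ereal (g p2) - real_of_ereal (g p1))"
      unfolding D_def by (subst dist_commute, rule resolvent_variational_ineq[OF H cvx lam p2 g2 g1])
    have s1: "(dist a1 p2)\<^sup>2 - (dist a2 p2)\<^sup>2 \<le> \<delta> * (dist a1 p2 + dist a2 p2)"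
      using dist_triangle[of a1 p2 a2] by (intro power2_diff_le_mult_sum) (auto simp: \<delta>_def)
    have s2: "(dist a2 p1)\<^sup>2 - (dist a1 p1)\<^sup>2 \<le> \<delta> * (dist a2 p1 + dist a1 p1)"
      using dist_triangle[of a2 p1 a1] by (intro power2_diff_le_mult_sum) (auto simp: \<delta>_def dist_commute)
    have t1: "dist a1 p2 \<le> c + D" by (simp add: c_def D_def dist_triangle)
    have t2: "dist a2 p2 \<le> \<delta> + c + D"
      using dist_triangle[of a2 p2 a1] t1 by (simp add: \<delta>_def dist_commute)
    have t3: "dist a2 p1 \<le> \<delta> + c"
      using dist_triangle[of a2 p1 a1] by (simp add: \<delta>_def c_def dist_commute)
    have "2 * D\<^sup>2 \<le> \<delta> * (dist a1 p2 + dist a2 p2 + dist a2 p1 + dist a1 p1)"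
      using v1 v2 s1 s2 by (simp add: algebra_simps)
    also have "\<dots> \<le> \<delta> * (4 * c + 2 * D + 2 * \<delta>)"
      using t1 t2 t3 by (intro mult_left_mono) (auto simp: c_def \<delta>_def)
    finally have main: "D\<^sup>2 \<le> \<delta> * (2 * c + D + \<delta>)" by (simp add: algebra_simps)
    have d: "\<delta> \<le> 1" "\<delta> \<le> \<epsilon> / 2" "\<delta> < \<epsilon>\<^sup>2 / (2 * (2 * c + 1))" "0 \<le> \<delta>"
      using a2 by (auto simp: \<eta>_def \<delta>_def)
    have "D \<ge> \<epsilon>" using \<open>\<not> dist p1 p2 < \<epsilon>\<close> by (simp add: D_def)
    have "\<delta> * (2 * c + D + \<delta>) \<le> \<delta> * (2 * c + 1) + \<delta> * D"
      using d by (simp add: algebra_simps mult_left_le)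
    then have "D * (D - \<delta>) \<le> \<delta> * (2 * c + 1)" using main by (simp add: power2_eq_square algebra_simps)
    moreover have "\<epsilon> * (\<epsilon> / 2) \<le> D * (D - \<delta>)"
      using \<open>D \<ge> \<epsilon>\<close> d eps by (intro mult_mono) auto
    moreover have "\<delta> * (2 * c + 1) < \<epsilon>\<^sup>2 / 2"
      using d c by (simp add: field_simps)
    ultimately show False by (simp add: power2_eq_square)
  qed
  ultimately show ?thesis using that by blast
qed

lemma resolvent_in_ball_near:
  fixes g :: "'x::metric_space \<Rightarrow> ereal"
  assumes H: "hadamard_space TYPE('x)" and cvx: "geodesically_convex g" and pr: "proper_fun g"
    and lam: "lam > 0" and p: "p \<in> resolvent g lam a" and "p \<in> ball z r"
  obtains \<eta> where "\<eta> > 0" "\<And>a' p'. p' \<in> resolvent g lam a' \<Longrightarrow> dist a a' < \<eta> \<Longrightarrow> p' \<in> ball z r"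
proof -
  have "r - dist z p > 0" using \<open>p \<in> ball z r\<close> by simp
  from resolvent_continuity[OF H cvx pr lam p this] obtain \<eta> where "\<eta> > 0"
    and close: "\<And>a' p'. p' \<in> resolvent g lam a' \<Longrightarrow> dist a a' < \<eta> \<Longrightarrow> dist p p' < r - dist z p"
    by blast
  show ?thesis
  proof (rule that[OF \<open>\<eta> > 0\<close>])
    fix a' p' assume "p' \<in> resolvent g lam a'" "dist a a' < \<eta>"
    then have "dist p p' < r - dist z p" by (rule close)
    then show "p' \<in> ball z r" using dist_triangle[of z p' p] by simp
  qed
qed

section \<open>Measurability in separable metric spaces\<close>

lemma separable_spaceE:
  assumes "separable_space TYPE('x::topological_space)"
  obtains D :: "'x::topological_space set" where "countable D" "closure D = UNIV"
  using assms unfolding separable_space_def by blast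

lemma dense_approachable:
  fixes D :: "'x::metric_space set"
  assumes "closure D = UNIV" "e > 0"
  obtains q where "q \<in> D" "dist x q < e"
  using closure_approachableD[of x D e] assms by auto

lemma borel_measurable_dist_const:
  "a \<in> borel_measurable Q \<Longrightarrow> (\<lambda>\<omega>. dist (a \<omega>) q) \<in> borel_measurable Q"
  by (rule borel_measurable_continuous_on[of "\<lambda>x. dist x q"]) (intro continuous_intros)

lemma borel_measurable_if_preimage_balls:
  fixes h :: "'w \<Rightarrow> 'x::metric_space"
  assumes "separable_space TYPE('x)"
    and balls: "\<And>z r. h -` ball z r \<inter> space Q \<in> sets Q"
  shows "h \<in> borel_measurable Q"
proof (rule borel_measurableI)
  obtain D :: "'x set" where D: "countable D" "closure D = UNIV"
    using assms(1) by (rule separable_spaceE)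
  fix S :: "'x set" assume S: "open S"
  define I where "I = {(q, r). q \<in> D \<and> r \<in> \<rat> \<and> ball q r \<subseteq> S}"
  have "countable I"
    by (rule countable_subset[of _ "D \<times> \<rat>"]) (auto simp: I_def D(1) countable_rat)
  have "S = (\<Union>(q, r)\<in>I. ball q r)"
  proof
    show "S \<subseteq> (\<Union>(q, r)\<in>I. ball q r)"
    proof
      fix x assume "x \<in> S"
      then obtain e where e: "e > 0" "ball x e \<subseteq> S" using S open_contains_ball by blast
      obtain q where q: "q \<in> D" "dist x q < e / 2" using dense_approachable[OF D(2), of "e / 2"] e by auto
      obtain r where r: "r \<in> \<rat>" "dist x q < r" "r < e / 2" using Rats_dense_in_real[OF q(2)] by auto
      have "ball q r \<subseteq> ball x e"
      proof
        fix y assume "y \<in> ball q r"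
        then show "y \<in> ball x e" using r dist_triangle[of x y q] by simp
      qed
      with q r e have "(q, r) \<in> I" by (auto simp: I_def)
      moreover have "x \<in> ball q r" using r by (simp add: dist_commute)
      ultimately show "x \<in> (\<Union>(q, r)\<in>I. ball q r)" by blast
    qed
  qed (auto simp: I_def)
  then have "h -` S \<inter> space Q = (\<Union>(q, r)\<in>I. h -` ball q r \<inter> space Q)"
    by auto
  also have "\<dots> \<in> sets Q"
    using \<open>countable I\<close> balls by (intro sets.countable_UN'') auto
  finally show "h -` S \<inter> space Q \<in> sets Q" .
qed

text \<open>Without second countability of the type, \<open>borel \<Otimes>\<^sub>M borel\<close> may be smaller than the Borel
  algebra of the product; in a separable space \<open>dist\<close> is still measurable on it, being the
  countable infimum \<open>dist u v = (INF q\<in>D. dist u q + dist q v)\<close>.\<close>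
lemma borel_measurable_dist_separable:
  fixes a b :: "'w \<Rightarrow> 'x::metric_space"
  assumes "separable_space TYPE('x)"
    and a: "a \<in> borel_measurable Q" and b: "b \<in> borel_measurable Q"
  shows "(\<lambda>\<omega>. dist (a \<omega>) (b \<omega>)) \<in> borel_measurable Q"
proof -
  obtain D :: "'x set" where D: "countable D" "closure D = UNIV"
    using assms(1) by (rule separable_spaceE)
  have eq: "ereal (dist u v) = (INF q\<in>D. ereal (dist u q + dist q v))" for u v :: 'x
  proof (rule antisym)
    show "ereal (dist u v) \<le> (INF q\<in>D. ereal (dist u q + dist q v))"
      by (rule INF_greatest) (simp add: dist_triangle)
    show "(INF q\<in>D. ereal (dist u q + dist q v)) \<le> ereal (dist u v)"
    proof (rule ereal_le_epsilon2)
      fix e :: real assume "e > 0"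
      then obtain q where q: "q \<in> D" "dist u q < e / 2"
        using dense_approachable[OF D(2)] by (metis half_gt_zero)
      then have "dist u q + dist q v \<le> dist u v + e"
        using dist_triangle[of q v u] by (simp add: dist_commute)
      with q(1) have "(INF q\<in>D. ereal (dist u q + dist q v)) \<le> ereal (dist u v + e)"
        by (intro INF_lower2) auto
      then show "(INF q\<in>D. ereal (dist u q + dist q v)) \<le> ereal (dist u v) + ereal e"
        by simp
    qed
  qed
  have [measurable]: "(\<lambda>\<omega>. dist (a \<omega>) q) \<in> borel_measurable Q" "(\<lambda>\<omega>. dist q (b \<omega>)) \<in> borel_measurable Q" for q
    using borel_measurable_dist_const[OF a] borel_measurable_dist_const[OF b] by (simp_all add: dist_commute)
  have "(\<lambda>\<omega>. INF q\<in>D. ereal (dist (a \<omega>) q + dist q (b \<omega>))) \<in> borel_measurable Q"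
    using D(1) by (intro borel_measurable_INF) auto
  then have "(\<lambda>\<omega>. real_of_ereal (INF q\<in>D. ereal (dist (a \<omega>) q + dist q (b \<omega>)))) \<in> borel_measurable Q"
    by measurable
  then show ?thesis by (simp add: eq[symmetric])
qed

lemma INF_dense_open_le:
  fixes \<psi> :: "'x::metric_space \<Rightarrow> real"
  assumes "continuous_on UNIV \<psi>" "open U" "p \<in> U" "closure D = UNIV"
  shows "(INF q\<in>D \<inter> U. ereal (\<psi> q)) \<le> ereal (\<psi> p)"
proof (rule ereal_le_epsilon2)
  fix e :: real assume e: "e > 0"
  obtain \<eta> where \<eta>: "\<eta> > 0" "\<And>y. dist y p < \<eta> \<Longrightarrow> dist (\<psi> y) (\<psi> p) < e"
    using assms(1) e unfolding continuous_on_iff by blast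
  obtain \<eta>' where \<eta>': "\<eta>' > 0" "ball p \<eta>' \<subseteq> U" using assms(2,3) open_contains_ball by blast
  obtain q where q: "q \<in> D" "dist p q < min \<eta> \<eta>'"
    using dense_approachable[OF assms(4), of "min \<eta> \<eta>'"] \<eta> \<eta>' by auto
  have "dist (\<psi> q) (\<psi> p) < e" using \<eta>(2)[of q] q by (simp add: dist_commute)
  then have "q \<in> D \<inter> U" "\<psi> q \<le> \<psi> p + e"
    using q \<eta>' by (auto simp: dist_real_def)
  then have "(INF q\<in>D \<inter> U. ereal (\<psi> q)) \<le> ereal (\<psi> p + e)"
    by (intro INF_lower2) auto
  then show "(INF q\<in>D \<inter> U. ereal (\<psi> q)) \<le> ereal (\<psi> p) + ereal e"
    by simp
qed

lemma in_ball_iff_INF_less_if_quadratic_growth: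
  fixes \<psi> :: "'x::metric_space \<Rightarrow> real"
  assumes cont: "continuous_on UNIV \<psi>" and c: "c > 0"
    and growth: "\<And>v. \<psi> p + c * (dist p v)\<^sup>2 \<le> \<psi> v" and D: "closure D = UNIV"
  shows "p \<in> ball z r \<longleftrightarrow>
    (\<exists>s\<in>\<rat>. 0 < s \<and> s < r \<and> (INF q\<in>D \<inter> ball z s. ereal (\<psi> q)) < (INF q\<in>D \<inter> - cball z s. ereal (\<psi> q)))"
proof
  assume "p \<in> ball z r"
  then obtain s where s: "s \<in> \<rat>" "dist z p < s" "s < r" using Rats_dense_in_real by force
  then have "0 < s" using zero_le_dist[of z p] by linarith
  have "(INF q\<in>D \<inter> ball z s. ereal (\<psi> q)) \<le> ereal (\<psi> p)"
    by (rule INF_dense_open_le[OF cont _ _ D]) (use s in auto)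
  also have "\<dots> < ereal (\<psi> p + c * (s - dist z p)\<^sup>2)" using s c by simp
  also have "\<dots> \<le> (INF q\<in>D \<inter> - cball z s. ereal (\<psi> q))"
  proof (rule INF_greatest)
    fix q assume "q \<in> D \<inter> - cball z s"
    then have "s - dist z p \<le> dist p q" using dist_triangle[of z q p] by simp
    then have "c * (s - dist z p)\<^sup>2 \<le> c * (dist p q)\<^sup>2"
      using s(2) c by (intro mult_left_mono power_mono) auto
    then show "ereal (\<psi> p + c * (s - dist z p)\<^sup>2) \<le> ereal (\<psi> q)"
      using growth[of q] by simp
  qed
  finally show "\<exists>s\<in>\<rat>. 0 < s \<and> s < r \<and>
      (INF q\<in>D \<inter> ball z s. ereal (\<psi> q)) < (INF q\<in>D \<inter> - cball z s. ereal (\<psi> q))"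
    using s \<open>0 < s\<close> by blast
next
  assume "\<exists>s\<in>\<rat>. 0 < s \<and> s < r \<and>
      (INF q\<in>D \<inter> ball z s. ereal (\<psi> q)) < (INF q\<in>D \<inter> - cball z s. ereal (\<psi> q))"
  then obtain s where s: "s < r"
    and less: "(INF q\<in>D \<inter> ball z s. ereal (\<psi> q)) < (INF q\<in>D \<inter> - cball z s. ereal (\<psi> q))"
    by blast
  have "dist z p \<le> s"
  proof (rule ccontr)
    assume "\<not> dist z p \<le> s"
    then have "(INF q\<in>D \<inter> - cball z s. ereal (\<psi> q)) \<le> ereal (\<psi> p)"
      by (intro INF_dense_open_le[OF cont _ _ D]) auto
    also have "\<dots> \<le> (INF q\<in>D \<inter> ball z s. ereal (\<psi> q))"
    proof (rule INF_greatest)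
      fix q
      have "0 \<le> c * (dist p q)\<^sup>2" using c by simp
      then show "ereal (\<psi> p) \<le> ereal (\<psi> q)" using growth[of q] by simp
    qed
    finally show False using less by simp
  qed
  with s show "p \<in> ball z r" by simp
qed

lemma resolvent_in_ball_iff_INF_less:
  fixes g :: "'x::metric_space \<Rightarrow> ereal"
  assumes H: "hadamard_space TYPE('x)" and cvx: "geodesically_convex g" and pr: "proper_fun g"
    and lip: "\<forall>u v. g u - g v \<le> ereal (K * dist u v)" and K: "K \<ge> 0"
    and lam: "lam > 0" and p: "p \<in> resolvent g lam a" and D: "closure D = UNIV"
  shows "p \<in> ball z r \<longleftrightarrow>
    (\<exists>s\<in>\<rat>. 0 < s \<and> s < r \<and>
       (INF q\<in>D \<inter> ball z s. g q + ereal ((dist a q)\<^sup>2 / (2 * lam)))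
         < (INF q\<in>D \<inter> - cball z s. g q + ereal ((dist a q)\<^sup>2 / (2 * lam))))"
proof -
  define \<psi> where "\<psi> v = real_of_ereal (g v) + (dist a v)\<^sup>2 / (2 * lam)" for v
  have \<psi>: "g v + ereal ((dist a v)\<^sup>2 / (2 * lam)) = ereal (\<psi> v)" for v
    using lipschitz_proper_finite[OF pr lip, of v] unfolding \<psi>_def by (metis plus_ereal.simps(1))
  have cont: "continuous_on UNIV \<psi>"
    unfolding \<psi>_def using lam by (intro continuous_intros continuous_on_real_of_ereal_lipschitz[OF pr lip K]) auto
  have growth: "\<psi> p + 1 / (2 * lam) * (dist p v)\<^sup>2 \<le> \<psi> v" for v
    using resolvent_quadratic_growth[OF H cvx pr lam p, of v] unfolding \<psi> by (simp add: \<psi>_def)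
  show ?thesis
    unfolding \<psi> by (rule in_ball_iff_INF_less_if_quadratic_growth[OF cont _ growth D]) (use lam in simp)
qed

text \<open>Every subset of the exceptional set \<open>N\<close> is measurable, so the sets \<open>E q \<delta>\<close> below need no
  measurability of \<open>f\<close>; continuity of the resolvent in its base point does the rest.\<close>
lemma resolvent_preimage_ball_exceptional:
  fixes f :: "'e \<Rightarrow> 'x::metric_space \<Rightarrow> ereal"
  assumes H: "hadamard_space TYPE('x)" and sep: "separable_space TYPE('x)" and lam: "lam > 0"
    and nci: "\<And>e. e \<in> space M \<Longrightarrow> proper_fun (f e) \<and> geodesically_convex (f e)"
    and N_sub: "\<And>A. A \<subseteq> N \<Longrightarrow> A \<in> sets M"
    and xi: "xi \<in> measurable Q M" and xa: "xa \<in> borel_measurable Q"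
    and xb: "\<And>\<omega>. \<omega> \<in> space Q \<Longrightarrow> xb \<omega> \<in> resolvent (f (xi \<omega>)) lam (xa \<omega>)"
  shows "{\<omega>\<in>space Q. xi \<omega> \<in> N \<and> xb \<omega> \<in> ball z r} \<in> sets Q"
proof -
  obtain D :: "'x set" where D: "countable D" "closure D = UNIV"
    using sep by (rule separable_spaceE)
  define E where "E q \<delta> = {e \<in> N. \<forall>\<omega>'\<in>space Q. xi \<omega>' = e \<and> dist (xa \<omega>') q < \<delta> \<longrightarrow> xb \<omega>' \<in> ball z r}"
    for q \<delta>
  define I where "I = D \<times> (\<rat> :: real set)"
  have "countable I" unfolding I_def using D(1) countable_rat by blast
  have "{\<omega>\<in>space Q. xi \<omega> \<in> N \<and> xb \<omega> \<in> ball z r}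
      = (\<Union>(q, \<delta>)\<in>I. {\<omega>\<in>space Q. dist (xa \<omega>) q < \<delta>} \<inter> (xi -` E q \<delta> \<inter> space Q))"
  proof (intro equalityI subsetI)
    fix \<omega> assume \<omega>: "\<omega> \<in> {\<omega>\<in>space Q. xi \<omega> \<in> N \<and> xb \<omega> \<in> ball z r}"
    define e where "e = xi \<omega>"
    have e: "proper_fun (f e)" "geodesically_convex (f e)"
      using \<omega> measurable_space[OF xi] nci unfolding e_def by auto
    obtain \<eta> where \<eta>: "\<eta> > 0"
      and close: "\<And>a' p'. p' \<in> resolvent (f e) lam a' \<Longrightarrow> dist (xa \<omega>) a' < \<eta> \<Longrightarrow> p' \<in> ball z r"
      by (rule resolvent_in_ball_near[OF H e(2,1) lam, of "xb \<omega>" "xa \<omega>"]) (use \<omega> xb e_def in auto)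
    obtain \<delta> where \<delta>: "\<delta> \<in> \<rat>" "0 < \<delta>" "\<delta> < \<eta> / 2"
      using Rats_dense_in_real[of 0 "\<eta> / 2"] \<eta> by auto
    obtain q where q: "q \<in> D" "dist (xa \<omega>) q < \<delta>"
      using dense_approachable[OF D(2) \<delta>(2)] by blast
    have "e \<in> E q \<delta>"
      unfolding E_def
    proof (intro CollectI conjI ballI impI)
      show "e \<in> N" using \<omega> by (simp add: e_def)
      fix \<omega>' assume \<omega>': "\<omega>' \<in> space Q" "xi \<omega>' = e \<and> dist (xa \<omega>') q < \<delta>"
      then have "dist (xa \<omega>) (xa \<omega>') < \<eta>"
        using q(2) \<delta>(3) dist_triangle[of "xa \<omega>" "xa \<omega>'" q] by (simp add: dist_commute)
      then show "xb \<omega>' \<in> ball z r"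
        using close xb[OF \<omega>'(1)] \<omega>'(2) by blast
    qed
    with q \<delta> \<omega> show "\<omega> \<in> (\<Union>(q, \<delta>)\<in>I. {\<omega>\<in>space Q. dist (xa \<omega>) q < \<delta>} \<inter> (xi -` E q \<delta> \<inter> space Q))"
      unfolding I_def e_def by blast
  qed (auto simp: E_def)
  also have "\<dots> \<in> sets Q"
  proof (intro sets.countable_UN'' \<open>countable I\<close>, clarify)
    fix q \<delta>
    have "{\<omega>\<in>space Q. dist (xa \<omega>) q < \<delta>} \<in> sets Q"
      using borel_measurable_dist_const[OF xa] by measurable
    moreover have "xi -` E q \<delta> \<inter> space Q \<in> sets Q"
      by (rule measurable_sets[OF xi N_sub]) (auto simp: E_def)
    ultimately show "{\<omega>\<in>space Q. dist (xa \<omega>) q < \<delta>} \<inter> (xi -` E q \<delta> \<inter> space Q) \<in> sets Q"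
      by blast
  qed
  finally show ?thesis .
qed

lemma resolvent_preimage_ball_regular:
  fixes f :: "'e \<Rightarrow> 'x::metric_space \<Rightarrow> ereal"
  assumes H: "hadamard_space TYPE('x)" and sep: "separable_space TYPE('x)" and lam: "lam > 0"
    and nci: "\<And>e. e \<in> space M \<Longrightarrow> proper_fun (f e) \<and> geodesically_convex (f e)"
    and fmeas: "(\<lambda>(e, x). f e x) \<in> borel_measurable (M \<Otimes>\<^sub>M borel)"
    and N: "N \<in> sets M"
    and lip: "\<And>e. e \<in> space M - N \<Longrightarrow> (\<forall>u v. f e u - f e v \<le> ereal (L e * dist u v)) \<and> L e \<ge> 0"
    and xi: "xi \<in> measurable Q M" and xa: "xa \<in> borel_measurable Q"
    and xb: "\<And>\<omega>. \<omega> \<in> space Q \<Longrightarrow> xb \<omega> \<in> resolvent (f (xi \<omega>)) lam (xa \<omega>)"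
  shows "{\<omega>\<in>space Q. xi \<omega> \<notin> N \<and> xb \<omega> \<in> ball z r} \<in> sets Q"
proof -
  obtain D :: "'x set" where D: "countable D" "closure D = UNIV"
    using sep by (rule separable_spaceE)
  define \<phi> where "\<phi> \<omega> v = f (xi \<omega>) v + ereal ((dist (xa \<omega>) v)\<^sup>2 / (2 * lam))" for \<omega> v
  have "{\<omega>\<in>space Q. xi \<omega> \<notin> N \<and> xb \<omega> \<in> ball z r}
     = (space Q - (xi -` N \<inter> space Q)) \<inter>
       (\<Union>s\<in>\<rat>. {\<omega>\<in>space Q. 0 < s \<and> s < r \<and> (INF q\<in>D \<inter> ball z s. \<phi> \<omega> q) < (INF q\<in>D \<inter> - cball z s. \<phi> \<omega> q)})"
  proof -
    have "xb \<omega> \<in> ball z r \<longleftrightarrow>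
        (\<exists>s\<in>\<rat>. 0 < s \<and> s < r \<and> (INF q\<in>D \<inter> ball z s. \<phi> \<omega> q) < (INF q\<in>D \<inter> - cball z s. \<phi> \<omega> q))"
      if "\<omega> \<in> space Q" "xi \<omega> \<notin> N" for \<omega>
    proof -
      have e: "xi \<omega> \<in> space M - N" using that measurable_space[OF xi] by blast
      show ?thesis
        unfolding \<phi>_def
        by (rule resolvent_in_ball_iff_INF_less[OF H _ _ _ _ lam xb[OF that(1)] D(2)])
           (use nci[of "xi \<omega>"] lip[OF e] e in auto)
    qed
    then show ?thesis by blast
  qed
  also have "\<dots> \<in> sets Q"
  proof -
    have "(\<lambda>\<omega>. \<phi> \<omega> q) \<in> borel_measurable Q" for q
    proof -
      have "(\<lambda>\<omega>. (xi \<omega>, q)) \<in> Q \<rightarrow>\<^sub>M M \<Otimes>\<^sub>M borel" using xi by measurable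
      from measurable_comp[OF this fmeas]
      have [measurable]: "(\<lambda>\<omega>. f (xi \<omega>) q) \<in> borel_measurable Q" by (simp add: comp_def)
      have [measurable]: "(\<lambda>\<omega>. dist (xa \<omega>) q) \<in> borel_measurable Q"
        by (rule borel_measurable_dist_const[OF xa])
      show ?thesis unfolding \<phi>_def by measurable
    qed
    then have [measurable]: "(\<lambda>\<omega>. INF q\<in>D \<inter> U. \<phi> \<omega> q) \<in> borel_measurable Q" for U
      using D(1) by (intro borel_measurable_INF) auto
    have "xi -` N \<inter> space Q \<in> sets Q" using measurable_sets[OF xi N] .
    moreover have "{\<omega>\<in>space Q. 0 < s \<and> s < r \<and> (INF q\<in>D \<inter> ball z s. \<phi> \<omega> q) < (INF q\<in>D \<inter> - cball z s. \<phi> \<omega> q)}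
        \<in> sets Q" for s
      by measurable
    ultimately show ?thesis
      using countable_rat by blast
  qed
  finally show ?thesis .
qed

lemma resolvent_selection_measurable:
  fixes f :: "'e \<Rightarrow> 'x::metric_space \<Rightarrow> ereal"
  assumes H: "hadamard_space TYPE('x)" and sep: "separable_space TYPE('x)" and lam: "lam > 0"
    and nci: "\<And>e. e \<in> space M \<Longrightarrow> proper_fun (f e) \<and> geodesically_convex (f e)"
    and fmeas: "(\<lambda>(e, x). f e x) \<in> borel_measurable (M \<Otimes>\<^sub>M borel)"
    and N_sub: "\<And>A. A \<subseteq> N \<Longrightarrow> A \<in> sets M"
    and lip: "\<And>e. e \<in> space M - N \<Longrightarrow> (\<forall>u v. f e u - f e v \<le> ereal (L e * dist u v)) \<and> L e \<ge> 0"
    and xi: "xi \<in> measurable Q M" and xa: "xa \<in> borel_measurable Q"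
    and xb: "\<And>\<omega>. \<omega> \<in> space Q \<Longrightarrow> xb \<omega> \<in> resolvent (f (xi \<omega>)) lam (xa \<omega>)"
  shows "xb \<in> borel_measurable Q"
proof (rule borel_measurable_if_preimage_balls[OF sep])
  fix z r
  have "xb -` ball z r \<inter> space Q
      = {\<omega>\<in>space Q. xi \<omega> \<in> N \<and> xb \<omega> \<in> ball z r} \<union> {\<omega>\<in>space Q. xi \<omega> \<notin> N \<and> xb \<omega> \<in> ball z r}"
    by auto
  also have "\<dots> \<in> sets Q"
    using resolvent_preimage_ball_exceptional[OF H sep lam nci N_sub xi xa xb]
      resolvent_preimage_ball_regular[OF H sep lam nci fmeas N_sub[OF order_refl] lip xi xa xb]
    by blast
  finally show "xb -` ball z r \<inter> space Q \<in> sets Q" .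
qed

section \<open>The natural filtration\<close>

lemma nat_filtration_generator_subset:
  "(\<Union>i\<in>I. {\<xi> i -` A \<inter> space P | A. A \<in> sets M}) \<subseteq> Pow (space P)"
  by auto

lemma space_nat_filtration [simp]: "space (nat_filtration P M \<xi> n) = space P"
  unfolding nat_filtration_def by (simp add: nat_filtration_generator_subset)

lemma sets_nat_filtration:
  "sets (nat_filtration P M \<xi> n) = sigma_sets (space P) (\<Union>i\<in>{1..n}. {\<xi> i -` A \<inter> space P | A. A \<in> sets M})"
  unfolding nat_filtration_def by (simp add: nat_filtration_generator_subset)

lemma measurable_nat_filtration:
  assumes "\<xi> i \<in> measurable P M" "1 \<le> i" "i \<le> n"
  shows "\<xi> i \<in> measurable (nat_filtration P M \<xi> n) M"
proof (rule measurableI)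
  fix x assume "x \<in> space (nat_filtration P M \<xi> n)"
  then show "\<xi> i x \<in> space M" using measurable_space[OF assms(1)] by simp
next
  fix A assume "A \<in> sets M"
  then have "\<xi> i -` A \<inter> space P \<in> (\<Union>i\<in>{1..n}. {\<xi> i -` A \<inter> space P | A. A \<in> sets M})"
    using assms by (intro UN_I[of i]) auto
  then show "\<xi> i -` A \<inter> space (nat_filtration P M \<xi> n) \<in> sets (nat_filtration P M \<xi> n)"
    by (simp add: sets_nat_filtration)
qed

lemma subalgebra_nat_filtration:
  assumes "\<And>i. 1 \<le> i \<Longrightarrow> \<xi> i \<in> measurable P M"
  shows "subalgebra P (nat_filtration P M \<xi> n)"
  unfolding subalgebra_def sets_nat_filtration
proof (intro conjI space_nat_filtration sets.sigma_sets_subset)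
  show "(\<Union>i\<in>{1..n}. {\<xi> i -` A \<inter> space P | A. A \<in> sets M}) \<subseteq> sets P"
    using assms measurable_sets by fastforce
qed

lemma subalgebra_nat_filtration_mono:
  assumes "m \<le> n"
  shows "subalgebra (nat_filtration P M \<xi> n) (nat_filtration P M \<xi> m)"
  unfolding subalgebra_def space_nat_filtration sets_nat_filtration
proof (intro conjI refl sigma_sets_mono' subsetI)
  fix X assume "X \<in> (\<Union>i\<in>{1..m}. {\<xi> i -` A \<inter> space P | A. A \<in> sets M})"
  then obtain i A where "i \<in> {1..m}" "A \<in> sets M" "X = \<xi> i -` A \<inter> space P" by blast
  with assms show "X \<in> (\<Union>i\<in>{1..n}. {\<xi> i -` A \<inter> space P | A. A \<in> sets M})"
    by (intro UN_I[of i]) auto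
qed

lemma indep_set_nat_filtration:
  assumes "prob_space P" and ind: "prob_space.indep_vars P (\<lambda>_. M) \<xi> {1..}"
  shows "prob_space.indep_set P (sigma_sets (space P) {\<xi> (Suc n) -` A \<inter> space P | A. A \<in> sets M})
           (sets (nat_filtration P M \<xi> n))"
proof -
  interpret prob_space P by fact
  define E where "E i = {\<xi> i -` A \<inter> space P | A. A \<in> sets M}" for i
  define I where "I b = (if b then {Suc n} else {1..n})" for b
  have "indep_sets E {1..}" using ind unfolding indep_vars_def2 E_def by blast
  then have "indep_sets E (\<Union>b. I b)"
    by (rule indep_sets_mono_index[rotated]) (auto simp: I_def)
  then have "indep_sets (\<lambda>b. sigma_sets (space P) (\<Union>i\<in>I b. E i)) UNIV"
  proof (rule indep_sets_collect_sigma)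
    show "Int_stable (E i)" for i
    proof (rule Int_stableI)
      fix a b assume "a \<in> E i" "b \<in> E i"
      then obtain A B where "A \<in> sets M" "B \<in> sets M" "a = \<xi> i -` A \<inter> space P" "b = \<xi> i -` B \<inter> space P"
        unfolding E_def by blast
      then show "a \<inter> b \<in> E i" unfolding E_def by (intro CollectI exI[of _ "A \<inter> B"]) auto
    qed
  qed (auto simp: disjoint_family_on_def I_def)
  moreover have "(\<lambda>b. sigma_sets (space P) (\<Union>i\<in>I b. E i)) =
     case_bool (sigma_sets (space P) (E (Suc n))) (sets (nat_filtration P M \<xi> n))"
    by (rule ext) (simp add: I_def E_def sets_nat_filtration split: bool.split)
  ultimately show ?thesis unfolding indep_set_def E_def by simp
qed

section \<open>Integrals of extended-real integrands\<close>

lemma borel_measurable_section: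
  assumes "(\<lambda>(e, x). f e x) \<in> borel_measurable (M \<Otimes>\<^sub>M borel)"
  shows "(\<lambda>e. f e z) \<in> borel_measurable M"
proof -
  have "(\<lambda>e. (e, z)) \<in> M \<rightarrow>\<^sub>M M \<Otimes>\<^sub>M borel" by measurable
  from measurable_comp[OF this assms] show ?thesis by (simp add: comp_def)
qed

lemma ennreal_real_of_ereal_abs_le: "ennreal (real_of_ereal \<bar>x\<bar>) \<le> e2ennreal x + e2ennreal (- x)"
  by (cases x) (auto simp: abs_if e2ennreal_neg)

lemma integrable_real_of_ereal_if_ext_integral_finite:
  assumes [measurable]: "h \<in> borel_measurable M"
    and fin: "ext_integral M h \<noteq> \<infinity>" "ext_integral M h \<noteq> -\<infinity>"
  shows "integrable M (\<lambda>e. real_of_ereal (h e))"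
proof (rule integrableI_bounded)
  define P where "P = (\<integral>\<^sup>+ e. e2ennreal (h e) \<partial>M)"
  define N where "N = (\<integral>\<^sup>+ e. e2ennreal (- h e) \<partial>M)"
  have "P \<noteq> \<infinity>" using fin(1) unfolding ext_integral_def P_def Let_def by (auto split: if_splits)
  moreover have "N \<noteq> \<infinity>"
  proof
    assume "N = \<infinity>"
    then have "ext_integral M h = -\<infinity>"
      using \<open>P \<noteq> \<infinity>\<close> unfolding ext_integral_def P_def[symmetric] N_def[symmetric] Let_def
      by (cases P rule: ennreal_cases) auto
    with fin(2) show False by simp
  qed
  moreover have "(\<integral>\<^sup>+ e. ennreal (norm (real_of_ereal (h e))) \<partial>M) \<le> (\<integral>\<^sup>+ e. e2ennreal (h e) + e2ennreal (- h e) \<partial>M)"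
    by (intro nn_integral_mono) (simp add: ennreal_real_of_ereal_abs_le)
  moreover have "(\<integral>\<^sup>+ e. e2ennreal (h e) + e2ennreal (- h e) \<partial>M) = P + N"
    unfolding P_def N_def by (intro nn_integral_add) measurable
  ultimately show "(\<integral>\<^sup>+ e. ennreal (norm (real_of_ereal (h e))) \<partial>M) < \<infinity>"
    by (simp add: less_top order_le_less_trans)
qed simp

lemma ext_integral_eq_integral:
  assumes fin: "AE e in M. h e = ereal (real_of_ereal (h e))"
    and int: "integrable M (\<lambda>e. real_of_ereal (h e))"
  shows "ext_integral M h = ereal (\<integral>e. real_of_ereal (h e) \<partial>M)"
proof -
  define g where "g e = real_of_ereal (h e)" for e
  have [measurable]: "g \<in> borel_measurable M" using int unfolding g_def by auto
  have pos: "(\<integral>\<^sup>+ e. e2ennreal (h e) \<partial>M) = (\<integral>\<^sup>+ e. ennreal (g e) \<partial>M)"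
    using fin by (intro nn_integral_cong_AE) (auto elim!: eventually_mono simp: g_def, metis e2ennreal_ereal)
  have neg: "(\<integral>\<^sup>+ e. e2ennreal (- h e) \<partial>M) = (\<integral>\<^sup>+ e. ennreal (- g e) \<partial>M)"
    using fin by (intro nn_integral_cong_AE) (auto elim!: eventually_mono simp: g_def,
        metis e2ennreal_ereal uminus_ereal.simps(1))
  have bnd: "(\<integral>\<^sup>+ e. ennreal (norm (g e)) \<partial>M) < \<infinity>"
    using int unfolding g_def integrable_iff_bounded by blast
  have "(\<integral>\<^sup>+ e. ennreal (g e) \<partial>M) < \<infinity>" "(\<integral>\<^sup>+ e. ennreal (- g e) \<partial>M) < \<infinity>"
    by (intro le_less_trans[OF nn_integral_mono bnd]; simp)+
  moreover have "(\<integral>e. g e \<partial>M) = enn2real (\<integral>\<^sup>+ e. ennreal (g e) \<partial>M) - enn2real (\<integral>\<^sup>+ e. ennreal (- g e) \<partial>M)"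
    by (rule real_lebesgue_integral_def) (use int in \<open>simp add: g_def\<close>)
  ultimately show ?thesis
    unfolding ext_integral_def Let_def pos neg g_def[symmetric]
    by (cases "\<integral>\<^sup>+ e. ennreal (g e) \<partial>M" rule: ennreal_cases;
        cases "\<integral>\<^sup>+ e. ennreal (- g e) \<partial>M" rule: ennreal_cases) auto
qed

text \<open>Lipschitz continuity with an integrable constant propagates finiteness of the integral
  from a single point to all points.\<close>
lemma ext_integral_lipschitz_integrand:
  fixes f :: "'e \<Rightarrow> 'x::metric_space \<Rightarrow> ereal"
  assumes fmeas: "(\<lambda>(e, x). f e x) \<in> borel_measurable (M \<Otimes>\<^sub>M borel)"
    and proper: "proper_fun (\<lambda>z. ext_integral M (\<lambda>e. f e z))"
    and lip: "AE e in M. (\<forall>u v. f e u - f e v \<le> ereal (L e * dist u v)) \<and> proper_fun (f e)"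
    and L: "integrable M L"
  shows "integrable M (\<lambda>e. real_of_ereal (f e z))"
    and "ext_integral M (\<lambda>e. f e z) = ereal (\<integral>e. real_of_ereal (f e z) \<partial>M)"
proof -
  have [measurable]: "(\<lambda>e. f e z) \<in> borel_measurable M" for z
    by (rule borel_measurable_section[OF fmeas])
  obtain z0 where "ext_integral M (\<lambda>e. f e z0) \<noteq> \<infinity>" "ext_integral M (\<lambda>e. f e z0) \<noteq> -\<infinity>"
    using proper unfolding proper_fun_def by blast
  then have int0: "integrable M (\<lambda>e. real_of_ereal (f e z0))"
    by (intro integrable_real_of_ereal_if_ext_integral_finite) auto
  show int: "integrable M (\<lambda>e. real_of_ereal (f e z))"
  proof (rule Bochner_Integration.integrable_bound)
    show "integrable M (\<lambda>e. \<bar>real_of_ereal (f e z0)\<bar> + L e * dist z z0)"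
      using int0 L by (intro Bochner_Integration.integrable_add Bochner_Integration.integrable_abs) auto
    show "AE e in M. norm (real_of_ereal (f e z)) \<le> norm (\<bar>real_of_ereal (f e z0)\<bar> + L e * dist z z0)"
      using lip
    proof eventually_elim
      case (elim e)
      then have "\<bar>real_of_ereal (f e z) - real_of_ereal (f e z0)\<bar> \<le> L e * dist z z0"
        by (intro lipschitz_real_of_ereal_abs) auto
      then have "\<bar>real_of_ereal (f e z)\<bar> \<le> \<bar>real_of_ereal (f e z0)\<bar> + L e * dist z z0"
        using abs_triangle_ineq2[of "real_of_ereal (f e z)" "real_of_ereal (f e z0)"] by linarith
      then show ?case unfolding real_norm_def by (rule order_trans[OF _ abs_ge_self])
    qed
  qed simp
  have "AE e in M. f e z = ereal (real_of_ereal (f e z))"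
    using lip by eventually_elim (rule lipschitz_proper_finite, auto)
  then show "ext_integral M (\<lambda>e. f e z) = ereal (\<integral>e. real_of_ereal (f e z) \<partial>M)"
    using int by (rule ext_integral_eq_integral)
qed

section \<open>Conditional expectations and independence\<close>

lemma AE_notin_if_set_integral_le:
  fixes g R :: "'w \<Rightarrow> real"
  assumes int: "integrable P (\<lambda>\<omega>. indicator C \<omega> * g \<omega>)" "integrable P (\<lambda>\<omega>. indicator C \<omega> * R \<omega>)"
    and less: "\<And>\<omega>. \<omega> \<in> C \<Longrightarrow> R \<omega> < g \<omega>"
    and le: "(\<integral>\<omega>. indicator C \<omega> * g \<omega> \<partial>P) \<le> (\<integral>\<omega>. indicator C \<omega> * R \<omega> \<partial>P)"
  shows "AE \<omega> in P. \<omega> \<notin> C"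
proof -
  define d where "d \<omega> = indicator C \<omega> * g \<omega> - indicator C \<omega> * R \<omega>" for \<omega>
  have d: "integrable P d" unfolding d_def using int by (rule Bochner_Integration.integrable_diff)
  have d0: "0 \<le> d \<omega>" for \<omega> using less[of \<omega>] by (auto simp: d_def indicator_def)
  have "(\<integral>\<omega>. d \<omega> \<partial>P) \<le> 0"
    using le unfolding d_def Bochner_Integration.integral_diff[OF int] by simp
  moreover have "0 \<le> (\<integral>\<omega>. d \<omega> \<partial>P)" using d0 by (intro Bochner_Integration.integral_nonneg) simp
  ultimately have "(\<integral>\<omega>. d \<omega> \<partial>P) = 0" by simp
  then have "AE \<omega> in P. d \<omega> = 0" using integral_nonneg_eq_0_iff_AE[OF d] d0 by simp
  then show ?thesis
    by (rule eventually_mono) (use less in \<open>force simp: d_def indicator_def\<close>)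
qed

lemma (in sigma_finite_subalgebra) nn_integral_indicator_nn_cond_exp:
  assumes [measurable]: "A \<in> sets F" "h \<in> borel_measurable M"
    and "\<And>\<omega>. 0 \<le> h \<omega>" "integrable M (\<lambda>\<omega>. indicator A \<omega> * h \<omega>)"
  shows "(\<integral>\<^sup>+\<omega>. indicator A \<omega> * nn_cond_exp M F (\<lambda>\<omega>. ennreal (h \<omega>)) \<omega> \<partial>M)
           = ennreal (\<integral>\<omega>. indicator A \<omega> * h \<omega> \<partial>M)"
proof -
  have "(\<integral>\<^sup>+\<omega>. indicator A \<omega> * nn_cond_exp M F (\<lambda>\<omega>. ennreal (h \<omega>)) \<omega> \<partial>M)
      = (\<integral>\<^sup>+\<omega>. indicator A \<omega> * ennreal (h \<omega>) \<partial>M)"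
    by (intro nn_cond_exp_intg) auto
  also have "\<dots> = (\<integral>\<^sup>+\<omega>. ennreal (indicator A \<omega> * h \<omega>) \<partial>M)"
    by (intro nn_integral_cong) (auto simp: indicator_def)
  also have "\<dots> = ennreal (\<integral>\<omega>. indicator A \<omega> * h \<omega> \<partial>M)"
    using assms(3,4) by (intro nn_integral_eq_integral) (auto simp: indicator_def)
  finally show ?thesis .
qed

lemma AE_notin_if_nn_integral_le:
  fixes g :: "'w \<Rightarrow> ennreal" and h R :: "'w \<Rightarrow> real"
  assumes "finite_measure P"
    and [measurable]: "C \<in> sets P" "g \<in> borel_measurable P" "R \<in> borel_measurable P"
    and on_C: "\<And>\<omega>. \<omega> \<in> C \<Longrightarrow> g \<omega> \<le> of_nat m \<and> ereal (R \<omega>) < enn2ereal (g \<omega>) \<and> \<bar>R \<omega>\<bar> \<le> K"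
    and g_integral: "(\<integral>\<^sup>+\<omega>. indicator C \<omega> * g \<omega> \<partial>P) = ennreal (\<integral>\<omega>. indicator C \<omega> * h \<omega> \<partial>P)"
    and h: "\<And>\<omega>. 0 \<le> h \<omega>"
    and le: "(\<integral>\<omega>. indicator C \<omega> * h \<omega> \<partial>P) \<le> (\<integral>\<omega>. indicator C \<omega> * R \<omega> \<partial>P)"
  shows "AE \<omega> in P. \<omega> \<notin> C"
proof -
  interpret finite_measure P by fact
  have g_real: "g \<omega> = ennreal (enn2real (g \<omega>)) \<and> enn2real (g \<omega>) \<le> m \<and> R \<omega> < enn2real (g \<omega>)"
    if "\<omega> \<in> C" for \<omega>
    using on_C[OF that]
    by (cases "g \<omega>" rule: ennreal_cases) (auto simp: ennreal_of_nat_eq_real_of_nat top_unique)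
  have int_g: "integrable P (\<lambda>\<omega>. indicator C \<omega> * enn2real (g \<omega>))"
    by (rule Bochner_Integration.integrable_bound[of _ "\<lambda>_. real m"])
       (use g_real in \<open>auto simp: indicator_def\<close>)
  have int_R: "integrable P (\<lambda>\<omega>. indicator C \<omega> * R \<omega>)"
    by (rule Bochner_Integration.integrable_bound[of _ "\<lambda>_. K"])
       (use on_C in \<open>force simp: indicator_def\<close>)+
  have "ennreal (\<integral>\<omega>. indicator C \<omega> * enn2real (g \<omega>) \<partial>P)
      = (\<integral>\<^sup>+\<omega>. ennreal (indicator C \<omega> * enn2real (g \<omega>)) \<partial>P)"
    using int_g by (intro nn_integral_eq_integral[symmetric]) (auto simp: indicator_def)
  also have "\<dots> = ennreal (\<integral>\<omega>. indicator C \<omega> * h \<omega> \<partial>P)"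
    unfolding g_integral[symmetric] using g_real by (intro nn_integral_cong) (auto simp: indicator_def)
  finally have "(\<integral>\<omega>. indicator C \<omega> * enn2real (g \<omega>) \<partial>P) = (\<integral>\<omega>. indicator C \<omega> * h \<omega> \<partial>P)"
    using h by (subst (asm) ennreal_inj) (auto intro!: Bochner_Integration.integral_nonneg)
  with le g_real show ?thesis
    by (intro AE_notin_if_set_integral_le[OF int_g int_R]) auto
qed

text \<open>\<open>R\<close> may be negative, so this is not an instance of the monotonicity of \<open>nn_cond_exp\<close>.\<close>
lemma nn_cond_exp_le_if_set_integrals_le:
  fixes P F :: "'w measure" and h R :: "'w \<Rightarrow> real"
  assumes "finite_measure P" and sub: "subalgebra P F"
    and h: "h \<in> borel_measurable P" "\<And>\<omega>. 0 \<le> h \<omega>"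
    and R: "R \<in> borel_measurable F"
    and B: "B \<in> sets F" and R_bounded: "\<And>\<omega>. \<omega> \<in> B \<Longrightarrow> \<bar>R \<omega>\<bar> \<le> K"
    and set_integrals: "\<And>A. A \<in> sets F \<Longrightarrow> A \<subseteq> B \<Longrightarrow>
       integrable P (\<lambda>\<omega>. indicator A \<omega> * h \<omega>) \<and>
       (\<integral>\<omega>. indicator A \<omega> * h \<omega> \<partial>P) \<le> (\<integral>\<omega>. indicator A \<omega> * R \<omega> \<partial>P)"
  shows "AE \<omega> in P. \<omega> \<in> B \<longrightarrow> enn2ereal (nn_cond_exp P F (\<lambda>\<omega>. ennreal (h \<omega>)) \<omega>) \<le> ereal (R \<omega>)"
proof -
  interpret sigma_finite_subalgebra P F
    by (rule finite_measure_subalgebra_is_sigma_finite)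
       (simp add: finite_measure_subalgebra_def finite_measure_subalgebra_axioms_def
         \<open>finite_measure P\<close> sub)
  define g where "g = nn_cond_exp P F (\<lambda>\<omega>. ennreal (h \<omega>))"
  have [measurable]: "g \<in> borel_measurable F" "g \<in> borel_measurable P" "R \<in> borel_measurable P"
    using measurable_from_subalg[OF sub R] unfolding g_def by simp_all
  have setsF: "A \<in> sets P" if "A \<in> sets F" for A using sub that unfolding subalgebra_def by auto
  have space: "space F = space P" using sub unfolding subalgebra_def by simp
  have g_integral: "(\<integral>\<^sup>+\<omega>. indicator A \<omega> * g \<omega> \<partial>P) = ennreal (\<integral>\<omega>. indicator A \<omega> * h \<omega> \<partial>P)"
    if "A \<in> sets F" "A \<subseteq> B" for A
    unfolding g_def using that set_integrals[OF that] h by (intro nn_integral_indicator_nn_cond_exp) auto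
  have "AE \<omega> in P. indicator B \<omega> * g \<omega> \<noteq> \<infinity>"
    using setsF[OF B] by (intro nn_integral_PInf_AE) (simp_all add: g_integral[OF B order_refl])
  then have finite: "AE \<omega> in P. \<omega> \<in> B \<longrightarrow> g \<omega> \<noteq> \<infinity>"
    by (rule eventually_mono) (auto simp: indicator_def)
  define C where "C m = {\<omega>\<in>space P. \<omega> \<in> B \<and> ereal (R \<omega>) < enn2ereal (g \<omega>) \<and> g \<omega> \<le> of_nat m}" for m :: nat
  have "AE \<omega> in P. \<omega> \<notin> C m" for m
  proof -
    have "{\<omega>\<in>space F. \<omega> \<in> B \<and> ereal (R \<omega>) < enn2ereal (g \<omega>) \<and> g \<omega> \<le> of_nat m} \<in> sets F"
      using B R by measurable
    then have CF: "C m \<in> sets F" unfolding C_def space .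
    have CB: "C m \<subseteq> B" unfolding C_def by auto
    show ?thesis
    proof (rule AE_notin_if_nn_integral_le[OF \<open>finite_measure P\<close> setsF[OF CF] _ _ _ g_integral[OF CF CB] h(2)])
      show "g \<omega> \<le> of_nat m \<and> ereal (R \<omega>) < enn2ereal (g \<omega>) \<and> \<bar>R \<omega>\<bar> \<le> K" if "\<omega> \<in> C m" for \<omega>
        using that R_bounded CB by (auto simp: C_def)
      show "(\<integral>\<omega>. indicator (C m) \<omega> * h \<omega> \<partial>P) \<le> (\<integral>\<omega>. indicator (C m) \<omega> * R \<omega> \<partial>P)"
        using set_integrals[OF CF CB] by simp
    qed simp_all
  qed
  then have "AE \<omega> in P. \<forall>m. \<omega> \<notin> C m" by (simp add: AE_all_countable)
  with finite show ?thesis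
  proof eventually_elim
    case (elim \<omega>)
    show ?case
    proof
      assume "\<omega> \<in> B"
      with elim obtain r where r: "g \<omega> = ennreal r" by (cases "g \<omega>" rule: ennreal_cases) auto
      obtain m :: nat where "r \<le> real m" using real_arch_simple by blast
      then have "g \<omega> \<le> of_nat m" using r by (simp add: ennreal_of_nat_eq_real_of_nat)
      moreover have "\<omega> \<in> space P" using \<open>\<omega> \<in> B\<close> sets.sets_into_space[OF B] space by auto
      ultimately have "\<not> ereal (R \<omega>) < enn2ereal (g \<omega>)"
        using elim \<open>\<omega> \<in> B\<close> unfolding C_def by blast
      then show "enn2ereal (nn_cond_exp P F (\<lambda>\<omega>. ennreal (h \<omega>)) \<omega>) \<le> ereal (R \<omega>)"
        unfolding g_def[symmetric] by simp
    qed
  qed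
qed

lemma (in prob_space) integral_indep_freeze:
  fixes \<phi> :: "'e \<Rightarrow> 't \<Rightarrow> real"
  assumes sub: "subalgebra M F" and S: "prob_space S"
    and xi: "xi \<in> measurable M S" and law: "distr M S xi = S"
    and V: "V \<in> measurable F T"
    and indep: "indep_set (sigma_sets (space M) {xi -` A \<inter> space M | A. A \<in> sets S}) (sets F)"
    and \<phi>: "(\<lambda>(e, w). \<phi> e w) \<in> borel_measurable (S \<Otimes>\<^sub>M T)"
    and int: "integrable M (\<lambda>\<omega>. \<phi> (xi \<omega>) (V \<omega>))"
  shows "(\<integral>\<omega>. \<phi> (xi \<omega>) (V \<omega>) \<partial>M) = (\<integral>\<omega>. (\<integral>e. \<phi> e (V \<omega>) \<partial>S) \<partial>M)"
proof -
  interpret S: prob_space S by fact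
  have VM [measurable]: "V \<in> measurable M T" by (rule measurable_from_subalg[OF sub V])
  note [measurable] = xi \<phi>
  define \<nu> where "\<nu> = distr M T V"
  interpret \<nu>: prob_space \<nu> unfolding \<nu>_def by (rule prob_space_distr[OF VM])
  interpret S\<nu>: pair_sigma_finite S \<nu> ..
  have "space F = space M" using sub by (simp add: subalgebra_def)
  have joint: "S \<Otimes>\<^sub>M \<nu> = distr M (S \<Otimes>\<^sub>M T) (\<lambda>\<omega>. (xi \<omega>, V \<omega>))"
  proof (rule pair_measure_eqI)
    show "sigma_finite_measure S" "sigma_finite_measure \<nu>" ..
    show "sets (S \<Otimes>\<^sub>M \<nu>) = sets (distr M (S \<Otimes>\<^sub>M T) (\<lambda>\<omega>. (xi \<omega>, V \<omega>)))"
      by (simp add: \<nu>_def cong: sets_pair_measure_cong)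
    fix X Y assume X: "X \<in> sets S" and "Y \<in> sets \<nu>"
    then have Y: "Y \<in> sets T" by (simp add: \<nu>_def)
    have "xi -` X \<inter> space M \<in> sigma_sets (space M) {xi -` A \<inter> space M | A. A \<in> sets S}"
      using X by blast
    moreover have "V -` Y \<inter> space M \<in> sets F"
      using measurable_sets[OF V Y] \<open>space F = space M\<close> by simp
    ultimately have "prob ((xi -` X \<inter> space M) \<inter> (V -` Y \<inter> space M))
        = prob (xi -` X \<inter> space M) * prob (V -` Y \<inter> space M)"
      by (rule indep_setD[OF indep])
    moreover have "(\<lambda>\<omega>. (xi \<omega>, V \<omega>)) -` (X \<times> Y) \<inter> space M = (xi -` X \<inter> space M) \<inter> (V -` Y \<inter> space M)"
      by auto
    moreover have "emeasure S X = emeasure M (xi -` X \<inter> space M)"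
      using X by (subst law[symmetric], subst emeasure_distr) auto
    ultimately show "emeasure S X * emeasure \<nu> Y = emeasure (distr M (S \<Otimes>\<^sub>M T) (\<lambda>\<omega>. (xi \<omega>, V \<omega>))) (X \<times> Y)"
      using X Y by (simp add: \<nu>_def emeasure_distr emeasure_eq_measure ennreal_mult'')
  qed
  have inner [measurable]: "(\<lambda>w. \<integral>e. \<phi> e w \<partial>S) \<in> borel_measurable T"
    using measurable_pair_swap[OF \<phi>] by (intro S.borel_measurable_lebesgue_integral) (simp add: case_prod_beta)
  have "integrable (S \<Otimes>\<^sub>M \<nu>) (\<lambda>(e, w). \<phi> e w)"
    unfolding joint using int by (subst integrable_distr_eq) auto
  then have "(\<integral>\<omega>. \<phi> (xi \<omega>) (V \<omega>) \<partial>M) = (\<integral>w. (\<integral>e. \<phi> e w \<partial>S) \<partial>\<nu>)"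
    using integral_distr[of "\<lambda>\<omega>. (xi \<omega>, V \<omega>)" M "S \<Otimes>\<^sub>M T" "\<lambda>(e, w). \<phi> e w"]
    by (simp add: S\<nu>.integral_snd joint)
  also have "\<dots> = (\<integral>\<omega>. (\<integral>e. \<phi> e (V \<omega>) \<partial>S) \<partial>M)"
    unfolding \<nu>_def by (rule integral_distr[OF VM inner])
  finally show ?thesis .
qed

lemma AE_notin_preimage_null:
  assumes xi: "xi \<in> measurable P M" and law: "distr P M xi = M" and N: "N \<in> null_sets M"
  shows "AE \<omega> in P. xi \<omega> \<notin> N"
proof -
  have "emeasure P (xi -` N \<inter> space P) = emeasure (distr P M xi) N"
    using N by (intro emeasure_distr[OF xi, symmetric]) auto
  also have "\<dots> = 0" using N law by (simp add: null_setsD1)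
  finally show ?thesis using N measurable_sets[OF xi, of N]
    by (intro AE_I[of _ _ "xi -` N \<inter> space P"]) auto
qed

lemma set_integral_frozen:
  fixes \<Phi> :: "'e \<Rightarrow> 'x::metric_space \<Rightarrow> 'x \<Rightarrow> real"
  assumes P: "prob_space P" and M: "prob_space M" and sub: "subalgebra P F"
    and xi: "xi \<in> measurable P M" and law: "distr P M xi = M"
    and indep: "prob_space.indep_set P (sigma_sets (space P) {xi -` A \<inter> space P | A. A \<in> sets M}) (sets F)"
    and a: "a \<in> borel_measurable F" and b: "b \<in> borel_measurable F"
    and \<Phi>: "(\<lambda>(e, uv). \<Phi> e (fst uv) (snd uv)) \<in> borel_measurable (M \<Otimes>\<^sub>M (borel \<Otimes>\<^sub>M borel))"
    and N: "N \<in> null_sets M"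
    and G: "integrable M G" "\<And>e u v. e \<in> space M - N \<Longrightarrow> dist u v \<le> k \<Longrightarrow> \<bar>\<Phi> e u v\<bar> \<le> G e"
    and A: "A \<in> sets F" "A \<subseteq> {\<omega>. dist (a \<omega>) (b \<omega>) \<le> k}"
  shows "integrable P (\<lambda>\<omega>. indicator A \<omega> * \<Phi> (xi \<omega>) (a \<omega>) (b \<omega>))"
    and "(\<integral>\<omega>. indicator A \<omega> * \<Phi> (xi \<omega>) (a \<omega>) (b \<omega>) \<partial>P)
           = (\<integral>\<omega>. indicator A \<omega> * (\<integral>e. \<Phi> e (a \<omega>) (b \<omega>) \<partial>M) \<partial>P)"
proof -
  interpret P: prob_space P by fact
  define V where "V \<omega> = (indicator A \<omega> :: real, a \<omega>, b \<omega>)" for \<omega>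
  have V: "V \<in> measurable F (borel \<Otimes>\<^sub>M (borel \<Otimes>\<^sub>M borel))"
    using a b A(1) unfolding V_def by measurable
  define \<phi> where "\<phi> e w = fst w * \<Phi> e (fst (snd w)) (snd (snd w))" for e and w :: "real \<times> 'x \<times> 'x"
  have \<phi>: "(\<lambda>(e, w). \<phi> e w) \<in> borel_measurable (M \<Otimes>\<^sub>M (borel \<Otimes>\<^sub>M (borel \<Otimes>\<^sub>M borel)))"
  proof -
    have "(\<lambda>(e, w). (e, snd w)) \<in> measurable (M \<Otimes>\<^sub>M (borel \<Otimes>\<^sub>M (borel \<Otimes>\<^sub>M borel))) (M \<Otimes>\<^sub>M (borel \<Otimes>\<^sub>M borel))"
      by measurable
    from measurable_comp[OF this \<Phi>]
    have [measurable]: "(\<lambda>ew. \<Phi> (fst ew) (fst (snd (snd ew))) (snd (snd (snd ew))))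
        \<in> borel_measurable (M \<Otimes>\<^sub>M (borel \<Otimes>\<^sub>M (borel \<Otimes>\<^sub>M (borel :: 'x measure))))"
      by (simp add: comp_def case_prod_beta)
    show ?thesis unfolding \<phi>_def case_prod_beta by measurable
  qed
  have eq: "\<phi> (xi \<omega>) (V \<omega>) = indicator A \<omega> * \<Phi> (xi \<omega>) (a \<omega>) (b \<omega>)" for \<omega>
    by (simp add: \<phi>_def V_def)
  have int: "integrable P (\<lambda>\<omega>. \<phi> (xi \<omega>) (V \<omega>))"
  proof (rule Bochner_Integration.integrable_bound)
    show "integrable P (\<lambda>\<omega>. G (xi \<omega>))"
      using G(1) integrable_distr_eq[OF xi, of G] law by auto
    show "(\<lambda>\<omega>. \<phi> (xi \<omega>) (V \<omega>)) \<in> borel_measurable P"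
      using measurable_from_subalg[OF sub V] xi \<phi> by measurable
    show "AE \<omega> in P. norm (\<phi> (xi \<omega>) (V \<omega>)) \<le> norm (G (xi \<omega>))"
      using AE_notin_preimage_null[OF xi law N]
    proof (rule AE_mp, intro AE_I2 impI)
      fix \<omega> assume "\<omega> \<in> space P" "xi \<omega> \<notin> N"
      then have "xi \<omega> \<in> space M - N" using measurable_space[OF xi] by auto
      then show "norm (\<phi> (xi \<omega>) (V \<omega>)) \<le> norm (G (xi \<omega>))"
        using G(2)[of "xi \<omega>" "a \<omega>" "b \<omega>"] A(2) unfolding eq by (auto simp: indicator_def)
    qed
  qed
  then show "integrable P (\<lambda>\<omega>. indicator A \<omega> * \<Phi> (xi \<omega>) (a \<omega>) (b \<omega>))" unfolding eq .
  have "(\<integral>\<omega>. \<phi> (xi \<omega>) (V \<omega>) \<partial>P) = (\<integral>\<omega>. (\<integral>e. \<phi> e (V \<omega>) \<partial>M) \<partial>P)"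
    by (rule P.integral_indep_freeze[OF sub M xi law V _ \<phi> int]) (use indep in simp)
  then show "(\<integral>\<omega>. indicator A \<omega> * \<Phi> (xi \<omega>) (a \<omega>) (b \<omega>) \<partial>P)
           = (\<integral>\<omega>. indicator A \<omega> * (\<integral>e. \<Phi> e (a \<omega>) (b \<omega>) \<partial>M) \<partial>P)"
    unfolding eq by (simp add: \<phi>_def V_def)
qed

lemma (in sigma_finite_measure) borel_measurable_integral_compose:
  fixes \<Phi> :: "'a \<Rightarrow> 'x::metric_space \<Rightarrow> 'x \<Rightarrow> real"
  assumes \<Phi>: "(\<lambda>(e, uv). \<Phi> e (fst uv) (snd uv)) \<in> borel_measurable (M \<Otimes>\<^sub>M (borel \<Otimes>\<^sub>M borel))"
    and "a \<in> borel_measurable F" "b \<in> borel_measurable F"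
  shows "(\<lambda>\<omega>. \<integral>e. \<Phi> e (a \<omega>) (b \<omega>) \<partial>M) \<in> borel_measurable F"
proof -
  have "(\<lambda>uv. \<integral>e. \<Phi> e (fst uv) (snd uv) \<partial>M) \<in> borel_measurable (borel \<Otimes>\<^sub>M borel)"
    using measurable_pair_swap[OF \<Phi>] by (intro borel_measurable_lebesgue_integral) (simp add: case_prod_beta)
  moreover have "(\<lambda>\<omega>. (a \<omega>, b \<omega>)) \<in> F \<rightarrow>\<^sub>M borel \<Otimes>\<^sub>M borel" using assms(2,3) by measurable
  ultimately have "(\<lambda>uv. \<integral>e. \<Phi> e (fst uv) (snd uv) \<partial>M) \<circ> (\<lambda>\<omega>. (a \<omega>, b \<omega>)) \<in> borel_measurable F"
    by (intro measurable_comp)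
  then show ?thesis by (simp add: comp_def)
qed

lemma abs_integral_le_integral_AE:
  fixes f G :: "'a \<Rightarrow> real"
  assumes "integrable M G" "f \<in> borel_measurable M" "AE x in M. \<bar>f x\<bar> \<le> G x"
  shows "\<bar>\<integral>x. f x \<partial>M\<bar> \<le> (\<integral>x. G x \<partial>M)"
proof -
  have "integrable M f"
    using assms by (intro Bochner_Integration.integrable_bound[OF assms(1)]) (auto elim!: eventually_mono)
  then have "(\<integral>x. \<bar>f x\<bar> \<partial>M) \<le> (\<integral>x. G x \<partial>M)"
    using assms by (intro integral_mono_AE) auto
  then show ?thesis using integral_abs_bound[of M f] by linarith
qed

lemma nn_cond_exp_le_frozen_integral_bounded:
  fixes \<Phi> :: "'e \<Rightarrow> 'x::metric_space \<Rightarrow> 'x \<Rightarrow> real"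
  assumes P: "prob_space P" and M: "prob_space M" and sub: "subalgebra P F"
    and sep: "separable_space TYPE('x)"
    and xi: "xi \<in> measurable P M" and law: "distr P M xi = M"
    and indep: "prob_space.indep_set P (sigma_sets (space P) {xi -` A \<inter> space P | A. A \<in> sets M}) (sets F)"
    and a: "a \<in> borel_measurable F" and b: "b \<in> borel_measurable F"
    and \<Phi>: "(\<lambda>(e, uv). \<Phi> e (fst uv) (snd uv)) \<in> borel_measurable (M \<Otimes>\<^sub>M (borel \<Otimes>\<^sub>M borel))"
    and N: "N \<in> null_sets M"
    and G: "integrable M G" "\<And>e u v. e \<in> space M - N \<Longrightarrow> dist u v \<le> k \<Longrightarrow> \<bar>\<Phi> e u v\<bar> \<le> G e"
    and h: "h \<in> borel_measurable P" "\<And>\<omega>. 0 \<le> h \<omega>" "AE \<omega> in P. h \<omega> \<le> \<Phi> (xi \<omega>) (a \<omega>) (b \<omega>)"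
  shows "AE \<omega> in P. dist (a \<omega>) (b \<omega>) \<le> k \<longrightarrow>
           enn2ereal (nn_cond_exp P F (\<lambda>\<omega>. ennreal (h \<omega>)) \<omega>) \<le> ereal (\<integral>e. \<Phi> e (a \<omega>) (b \<omega>) \<partial>M)"
proof -
  interpret P: prob_space P by fact
  interpret M: prob_space M by fact
  define R where "R \<omega> = (\<integral>e. \<Phi> e (a \<omega>) (b \<omega>) \<partial>M)" for \<omega>
  have R: "R \<in> borel_measurable F"
    unfolding R_def by (rule M.borel_measurable_integral_compose[OF \<Phi> a b])
  define B where "B = {\<omega>\<in>space P. dist (a \<omega>) (b \<omega>) \<le> k}"
  have "{\<omega>\<in>space F. dist (a \<omega>) (b \<omega>) \<le> k} \<in> sets F"
    using borel_measurable_dist_separable[OF sep a b] by measurable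
  then have B: "B \<in> sets F" using sub by (simp add: B_def subalgebra_def)
  have R_bounded: "\<bar>R \<omega>\<bar> \<le> (\<integral>e. G e \<partial>M)" if "\<omega> \<in> B" for \<omega>
    unfolding R_def
  proof (rule abs_integral_le_integral_AE[OF G(1)])
    have "(\<lambda>e. (e, (a \<omega>, b \<omega>))) \<in> M \<rightarrow>\<^sub>M M \<Otimes>\<^sub>M (borel \<Otimes>\<^sub>M borel)" by measurable
    from measurable_comp[OF this \<Phi>] show "(\<lambda>e. \<Phi> e (a \<omega>) (b \<omega>)) \<in> borel_measurable M"
      by (simp add: comp_def)
    have "AE e in M. e \<notin> N" using N by (intro AE_I[of _ _ N]) auto
    then show "AE e in M. \<bar>\<Phi> e (a \<omega>) (b \<omega>)\<bar> \<le> G e"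
      by (rule AE_mp) (use that in \<open>auto intro: G(2) simp: B_def\<close>)
  qed
  have set_integrals: "integrable P (\<lambda>\<omega>. indicator A \<omega> * h \<omega>) \<and>
        (\<integral>\<omega>. indicator A \<omega> * h \<omega> \<partial>P) \<le> (\<integral>\<omega>. indicator A \<omega> * R \<omega> \<partial>P)"
    if A: "A \<in> sets F" "A \<subseteq> B" for A
  proof -
    have "A \<subseteq> {\<omega>. dist (a \<omega>) (b \<omega>) \<le> k}" using A(2) by (auto simp: B_def)
    note frozen = set_integral_frozen[OF P M sub xi law indep a b \<Phi> N G A(1) this]
    have "A \<in> sets P" using A(1) sub by (auto simp: subalgebra_def)
    have le: "AE \<omega> in P. indicator A \<omega> * h \<omega> \<le> indicator A \<omega> * \<Phi> (xi \<omega>) (a \<omega>) (b \<omega>)"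
      using h(3) by (rule eventually_mono) (auto simp: indicator_def)
    have int: "integrable P (\<lambda>\<omega>. indicator A \<omega> * h \<omega>)"
      using h(1,2) \<open>A \<in> sets P\<close> le
      by (intro Bochner_Integration.integrable_bound[OF frozen(1)]) (auto elim!: eventually_mono)
    have "(\<integral>\<omega>. indicator A \<omega> * h \<omega> \<partial>P) \<le> (\<integral>\<omega>. indicator A \<omega> * \<Phi> (xi \<omega>) (a \<omega>) (b \<omega>) \<partial>P)"
      using int frozen(1) le by (rule integral_mono_AE)
    with int frozen(2) show ?thesis by (simp add: R_def)
  qed
  have "AE \<omega> in P. \<omega> \<in> B \<longrightarrow> enn2ereal (nn_cond_exp P F (\<lambda>\<omega>. ennreal (h \<omega>)) \<omega>) \<le> ereal (R \<omega>)"
    by (rule nn_cond_exp_le_if_set_integrals_le[OF P.finite_measure_axioms sub h(1,2) R B R_bounded set_integrals])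
  then show ?thesis by (rule AE_mp) (auto simp: B_def R_def)
qed

lemma nn_cond_exp_le_frozen_integral:
  fixes \<Phi> :: "'e \<Rightarrow> 'x::metric_space \<Rightarrow> 'x \<Rightarrow> real"
  assumes P: "prob_space P" and M: "prob_space M" and sub: "subalgebra P F"
    and sep: "separable_space TYPE('x)"
    and xi: "xi \<in> measurable P M" and law: "distr P M xi = M"
    and indep: "prob_space.indep_set P (sigma_sets (space P) {xi -` A \<inter> space P | A. A \<in> sets M}) (sets F)"
    and a: "a \<in> borel_measurable F" and b: "b \<in> borel_measurable F"
    and \<Phi>: "(\<lambda>(e, uv). \<Phi> e (fst uv) (snd uv)) \<in> borel_measurable (M \<Otimes>\<^sub>M (borel \<Otimes>\<^sub>M borel))"
    and N: "N \<in> null_sets M"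
    and bound: "\<And>k. \<exists>G. integrable M G \<and> (\<forall>e\<in>space M - N. \<forall>u v. dist u v \<le> k \<longrightarrow> \<bar>\<Phi> e u v\<bar> \<le> G e)"
    and h: "h \<in> borel_measurable P" "\<And>\<omega>. 0 \<le> h \<omega>" "AE \<omega> in P. h \<omega> \<le> \<Phi> (xi \<omega>) (a \<omega>) (b \<omega>)"
  shows "AE \<omega> in P. enn2ereal (nn_cond_exp P F (\<lambda>\<omega>. ennreal (h \<omega>)) \<omega>) \<le> ereal (\<integral>e. \<Phi> e (a \<omega>) (b \<omega>) \<partial>M)"
proof -
  have "AE \<omega> in P. dist (a \<omega>) (b \<omega>) \<le> real k \<longrightarrow>
          enn2ereal (nn_cond_exp P F (\<lambda>\<omega>. ennreal (h \<omega>)) \<omega>) \<le> ereal (\<integral>e. \<Phi> e (a \<omega>) (b \<omega>) \<partial>M)"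
    for k :: nat
  proof -
    obtain G where "integrable M G" "\<And>e u v. e \<in> space M - N \<Longrightarrow> dist u v \<le> k \<Longrightarrow> \<bar>\<Phi> e u v\<bar> \<le> G e"
      using bound[of k] by blast
    then show ?thesis
      by (rule nn_cond_exp_le_frozen_integral_bounded[OF P M sub sep xi law indep a b \<Phi> N _ _ h])
  qed
  then have "AE \<omega> in P. \<forall>k::nat. dist (a \<omega>) (b \<omega>) \<le> real k \<longrightarrow>
      enn2ereal (nn_cond_exp P F (\<lambda>\<omega>. ennreal (h \<omega>)) \<omega>) \<le> ereal (\<integral>e. \<Phi> e (a \<omega>) (b \<omega>) \<partial>M)"
    unfolding AE_all_countable by blast
  then show ?thesis
    by (rule eventually_mono) (use real_arch_simple in blast)
qed

section \<open>One step of the stochastic proximal point iteration\<close>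

locale stochastic_proximal_iteration =
  fixes M :: "'e measure" and P :: "'w measure"
    and f :: "'e \<Rightarrow> 'x::metric_space \<Rightarrow> ereal"
    and lam :: "nat \<Rightarrow> real" and \<xi> :: "nat \<Rightarrow> 'w \<Rightarrow> 'e" and x :: "nat \<Rightarrow> 'w \<Rightarrow> 'x"
    and L :: "'e \<Rightarrow> real"
  assumes M_prob: "prob_space M" and M_complete: "complete_measure M"
    and P_prob: "prob_space P"
    and X_hadamard: "hadamard_space TYPE('x)" and X_separable: "separable_space TYPE('x)"
    and f_nci: "normal_convex_integrand M f"
    and fbar_proper: "proper_fun (\<lambda>z. ext_integral M (\<lambda>e. f e z))"
    and lam_pos: "\<And>n. lam n > 0"
    and \<xi>_indep: "prob_space.indep_vars P (\<lambda>_. M) \<xi> {1..}"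
    and \<xi>_distr: "\<And>i. i \<ge> 1 \<Longrightarrow> \<xi> i \<in> measurable P M \<and> distr P M (\<xi> i) = M"
    and x_0: "x 0 \<in> borel_measurable (nat_filtration P M \<xi> 0)"
    and x_Suc: "\<And>n \<omega>. x (Suc n) \<omega> \<in> prox f (lam n) (\<xi> (Suc n) \<omega>) (x n \<omega>)"
    and L_meas: "L \<in> borel_measurable M"
    and L_nonneg: "\<And>e. e \<in> space M \<Longrightarrow> 0 \<le> L e"
    and L_sq_int: "integrable M (\<lambda>e. (L e)\<^sup>2)"
    and L_lip: "AE e in M. \<forall>u v. f e u - f e v \<le> ereal (L e * dist u v)"
begin

interpretation M: prob_space M by (rule M_prob)

lemma f_measurable: "(\<lambda>(e, x). f e x) \<in> borel_measurable (M \<Otimes>\<^sub>M borel)"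
  using f_nci unfolding normal_convex_integrand_def by blast

lemma f_proper_convex: "e \<in> space M \<Longrightarrow> proper_fun (f e) \<and> geodesically_convex (f e)"
  using f_nci unfolding normal_convex_integrand_def by blast

lemma integrable_L: "integrable M L"
  using M.square_integrable_imp_integrable[OF L_meas L_sq_int] .

lemma lipschitz_exceptional_set:
  obtains N where "N \<in> null_sets M" "\<And>A. A \<subseteq> N \<Longrightarrow> A \<in> sets M"
    "\<And>e. e \<in> space M - N \<Longrightarrow> \<forall>u v. f e u - f e v \<le> ereal (L e * dist u v)"
proof -
  obtain N where N: "{e \<in> space M. \<not> (\<forall>u v. f e u - f e v \<le> ereal (L e * dist u v))} \<subseteq> N"
    "N \<in> null_sets M"
    using L_lip by (auto elim!: AE_E simp: null_sets_def)
  show ?thesis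
  proof (rule that[OF N(2)])
    show "A \<in> sets M" if "A \<subseteq> N" for A
      using complete_measure.complete[OF M_complete that N(2)] .
    show "\<forall>u v. f e u - f e v \<le> ereal (L e * dist u v)" if "e \<in> space M - N" for e
      using N(1) that by blast
  qed
qed

definition fbar :: "'x \<Rightarrow> real" where
  "fbar z = (\<integral>e. real_of_ereal (f e z) \<partial>M)"

lemma
  shows integrable_f: "integrable M (\<lambda>e. real_of_ereal (f e z))"
    and ext_integral_f: "ext_integral M (\<lambda>e. f e z) = ereal (fbar z)"
proof -
  have "AE e in M. (\<forall>u v. f e u - f e v \<le> ereal (L e * dist u v)) \<and> proper_fun (f e)"
    using L_lip by (rule AE_mp) (auto intro: f_proper_convex[THEN conjunct1])
  from ext_integral_lipschitz_integrand[OF f_measurable fbar_proper this integrable_L]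
  show "integrable M (\<lambda>e. real_of_ereal (f e z))" "ext_integral M (\<lambda>e. f e z) = ereal (fbar z)"
    unfolding fbar_def by auto
qed

lemma \<xi>_measurable: "1 \<le> i \<Longrightarrow> \<xi> i \<in> measurable P M"
  using \<xi>_distr by blast

lemma subalgebra_filtration: "subalgebra P (nat_filtration P M \<xi> n)"
  by (rule subalgebra_nat_filtration[OF \<xi>_measurable])

lemma x_measurable: "x n \<in> borel_measurable (nat_filtration P M \<xi> n)"
proof (induction n)
  case 0
  show ?case by (rule x_0)
next
  case (Suc n)
  obtain N where N: "N \<in> null_sets M" "\<And>A. A \<subseteq> N \<Longrightarrow> A \<in> sets M"
    "\<And>e. e \<in> space M - N \<Longrightarrow> \<forall>u v. f e u - f e v \<le> ereal (L e * dist u v)"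
    by (rule lipschitz_exceptional_set) blast
  have xn: "x n \<in> borel_measurable (nat_filtration P M \<xi> (Suc n))"
    using measurable_from_subalg[OF subalgebra_nat_filtration_mono Suc.IH] by simp
  have \<xi>: "\<xi> (Suc n) \<in> measurable (nat_filtration P M \<xi> (Suc n)) M"
    by (rule measurable_nat_filtration) (auto intro: \<xi>_measurable)
  show ?case
    by (rule resolvent_selection_measurable[OF X_hadamard X_separable lam_pos f_proper_convex
          f_measurable N(2) _ \<xi> xn])
       (use N(3) L_nonneg x_Suc[unfolded prox_eq_resolvent] in auto)
qed

definition step_integrand :: "nat \<Rightarrow> 'e \<Rightarrow> 'x \<Rightarrow> 'x \<Rightarrow> real" where
  "step_integrand n e u v =
     (dist u v)\<^sup>2 - 2 * lam n * (real_of_ereal (f e u) - real_of_ereal (f e v)) + 4 * (lam n)\<^sup>2 * (L e)\<^sup>2"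

lemma dist_step_le_step_integrand:
  assumes "\<xi> (Suc n) \<omega> \<in> space M" "\<forall>u v. f (\<xi> (Suc n) \<omega>) u - f (\<xi> (Suc n) \<omega>) v \<le> ereal (L (\<xi> (Suc n) \<omega>) * dist u v)"
  shows "(dist (x (Suc n) \<omega>) v)\<^sup>2 \<le> step_integrand n (\<xi> (Suc n) \<omega>) (x n \<omega>) v"
proof -
  have "(dist (x (Suc n) \<omega>) v)\<^sup>2 \<le> (dist (x n \<omega>) v)\<^sup>2
      - 2 * lam n * (real_of_ereal (f (\<xi> (Suc n) \<omega>) (x n \<omega>)) - real_of_ereal (f (\<xi> (Suc n) \<omega>) v))
      + (lam n)\<^sup>2 * (L (\<xi> (Suc n) \<omega>))\<^sup>2"
    using f_proper_convex[OF assms(1)] x_Suc[unfolded prox_eq_resolvent]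
    by (intro resolvent_dist_estimate[OF X_hadamard _ _ lam_pos _ assms(2)]) auto
  moreover have "0 \<le> (lam n)\<^sup>2 * (L (\<xi> (Suc n) \<omega>))\<^sup>2" by simp
  ultimately show ?thesis unfolding step_integrand_def by linarith
qed

lemma step_integrand_measurable:
  "(\<lambda>(e, uv). step_integrand n e (fst uv) (snd uv)) \<in> borel_measurable (M \<Otimes>\<^sub>M (borel \<Otimes>\<^sub>M borel))"
proof -
  have "(\<lambda>(e, uv). (e, fst uv)) \<in> measurable (M \<Otimes>\<^sub>M (borel \<Otimes>\<^sub>M (borel :: 'x measure))) (M \<Otimes>\<^sub>M borel)"
    by measurable
  from measurable_comp[OF this f_measurable]
  have [measurable]:
    "(\<lambda>euv. f (fst euv) (fst (snd euv))) \<in> borel_measurable (M \<Otimes>\<^sub>M (borel \<Otimes>\<^sub>M (borel :: 'x measure)))"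
    by (simp add: comp_def case_prod_beta)
  have "(\<lambda>(e, uv). (e, snd uv)) \<in> measurable (M \<Otimes>\<^sub>M (borel \<Otimes>\<^sub>M (borel :: 'x measure))) (M \<Otimes>\<^sub>M borel)"
    by measurable
  from measurable_comp[OF this f_measurable]
  have [measurable]:
    "(\<lambda>euv. f (fst euv) (snd (snd euv))) \<in> borel_measurable (M \<Otimes>\<^sub>M (borel \<Otimes>\<^sub>M (borel :: 'x measure)))"
    by (simp add: comp_def case_prod_beta)
  have [measurable]:
    "(\<lambda>euv. dist (fst (snd euv)) (snd (snd euv))) \<in> borel_measurable (M \<Otimes>\<^sub>M (borel \<Otimes>\<^sub>M (borel :: 'x measure)))"
    by (rule borel_measurable_dist_separable[OF X_separable]) simp_all
  note [measurable] = L_meas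
  show ?thesis unfolding step_integrand_def case_prod_beta by measurable
qed

lemma abs_step_integrand_le:
  assumes "e \<in> space M" "\<forall>u v. f e u - f e v \<le> ereal (L e * dist u v)" "dist u v \<le> k"
  shows "\<bar>step_integrand n e u v\<bar> \<le> k\<^sup>2 + 2 * lam n * k * L e + 4 * (lam n)\<^sup>2 * (L e)\<^sup>2"
proof -
  have abs_bound: "\<bar>p - q + c\<bar> \<le> B + A + c" if "\<bar>q\<bar> \<le> A" "0 \<le> p" "p \<le> B" "0 \<le> c"
    for p q c A B :: real
    using that by (auto simp: abs_le_iff)
  have "\<bar>real_of_ereal (f e u) - real_of_ereal (f e v)\<bar> \<le> L e * dist u v"
    using lipschitz_real_of_ereal_abs f_proper_convex[OF assms(1)] assms(2) by blast
  also have "\<dots> \<le> L e * k" using assms(3) L_nonneg[OF assms(1)] by (rule mult_left_mono)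
  finally have D: "\<bar>real_of_ereal (f e u) - real_of_ereal (f e v)\<bar> \<le> L e * k" .
  have "\<bar>2 * lam n * (real_of_ereal (f e u) - real_of_ereal (f e v))\<bar>
      = 2 * lam n * \<bar>real_of_ereal (f e u) - real_of_ereal (f e v)\<bar>"
    using lam_pos[of n] by (simp add: abs_mult)
  also have "\<dots> \<le> 2 * lam n * (L e * k)"
    using D lam_pos[of n] by (intro mult_left_mono) auto
  also have "\<dots> = 2 * lam n * k * L e" by simp
  finally have "\<bar>2 * lam n * (real_of_ereal (f e u) - real_of_ereal (f e v))\<bar> \<le> 2 * lam n * k * L e" .
  moreover have "(dist u v)\<^sup>2 \<le> k\<^sup>2" using assms(3) by (intro power_mono) auto
  ultimately show ?thesis
    unfolding step_integrand_def by (intro abs_bound) auto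
qed

lemma integral_step_integrand:
  "(\<integral>e. step_integrand n e u v \<partial>M)
     = (dist u v)\<^sup>2 - 2 * lam n * (fbar u - fbar v) + 4 * (lam n)\<^sup>2 * (\<integral>e. (L e)\<^sup>2 \<partial>M)"
  using integrable_f[of u] integrable_f[of v] L_sq_int
  by (simp add: step_integrand_def fbar_def M.prob_space)

lemma nn_cond_exp_dist_step_le:
  assumes y: "y \<in> borel_measurable (nat_filtration P M \<xi> n)"
  shows "AE \<omega> in P.
           enn2ereal (nn_cond_exp P (nat_filtration P M \<xi> n) (\<lambda>\<omega>'. ennreal ((dist (x (Suc n) \<omega>') (y \<omega>'))\<^sup>2)) \<omega>)
             \<le> ereal ((dist (x n \<omega>) (y \<omega>))\<^sup>2 - 2 * lam n * (fbar (x n \<omega>) - fbar (y \<omega>))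
                       + 4 * (lam n)\<^sup>2 * (\<integral>e. (L e)\<^sup>2 \<partial>M))"
proof -
  obtain N where N: "N \<in> null_sets M" "\<And>A. A \<subseteq> N \<Longrightarrow> A \<in> sets M"
    "\<And>e. e \<in> space M - N \<Longrightarrow> \<forall>u v. f e u - f e v \<le> ereal (L e * dist u v)"
    by (rule lipschitz_exceptional_set) blast
  have \<xi>: "\<xi> (Suc n) \<in> measurable P M" "distr P M (\<xi> (Suc n)) = M" using \<xi>_distr[of "Suc n"] by auto
  have bound: "\<exists>G. integrable M G \<and>
      (\<forall>e\<in>space M - N. \<forall>u v. dist u v \<le> k \<longrightarrow> \<bar>step_integrand n e u v\<bar> \<le> G e)" for k
  proof (intro exI[of _ "\<lambda>e. k\<^sup>2 + 2 * lam n * k * L e + 4 * (lam n)\<^sup>2 * (L e)\<^sup>2"] conjI ballI allI impI)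
    show "integrable M (\<lambda>e. k\<^sup>2 + 2 * lam n * k * L e + 4 * (lam n)\<^sup>2 * (L e)\<^sup>2)"
      using integrable_L L_sq_int by simp
    fix e and u v :: 'x assume "e \<in> space M - N" "dist u v \<le> k"
    with N(3) show "\<bar>step_integrand n e u v\<bar> \<le> k\<^sup>2 + 2 * lam n * k * L e + 4 * (lam n)\<^sup>2 * (L e)\<^sup>2"
      by (intro abs_step_integrand_le) auto
  qed
  have h: "(\<lambda>\<omega>. (dist (x (Suc n) \<omega>) (y \<omega>))\<^sup>2) \<in> borel_measurable P"
    using measurable_from_subalg[OF subalgebra_filtration x_measurable]
      measurable_from_subalg[OF subalgebra_filtration y]
    by (intro borel_measurable_power borel_measurable_dist_separable[OF X_separable])
  have "AE \<omega> in P. (dist (x (Suc n) \<omega>) (y \<omega>))\<^sup>2 \<le> step_integrand n (\<xi> (Suc n) \<omega>) (x n \<omega>) (y \<omega>)"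
    using AE_notin_preimage_null[OF \<xi> N(1)]
  proof (rule AE_mp, intro AE_I2 impI)
    fix \<omega> assume "\<omega> \<in> space P" "\<xi> (Suc n) \<omega> \<notin> N"
    then have "\<xi> (Suc n) \<omega> \<in> space M - N" using measurable_space[OF \<xi>(1)] by auto
    then show "(dist (x (Suc n) \<omega>) (y \<omega>))\<^sup>2 \<le> step_integrand n (\<xi> (Suc n) \<omega>) (x n \<omega>) (y \<omega>)"
      using N(3) by (intro dist_step_le_step_integrand) auto
  qed
  from nn_cond_exp_le_frozen_integral[OF P_prob M_prob subalgebra_filtration X_separable \<xi>
        indep_set_nat_filtration[OF P_prob \<xi>_indep] x_measurable y step_integrand_measurable N(1)
        bound h zero_le_power2 this]
  show ?thesis by (simp add: integral_step_integrand)
qed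

lemma one_step_estimate:
  assumes y: "y \<in> measurable (nat_filtration P M \<xi> n) borel"
  shows "(AE \<omega> in P.
            enn2ereal (nn_cond_exp P (nat_filtration P M \<xi> n)
                         (\<lambda>\<omega>'. ennreal ((dist (x (Suc n) \<omega>') (y \<omega>'))\<^sup>2)) \<omega>)
            \<le> ereal ((dist (x n \<omega>) (y \<omega>))\<^sup>2)
               - ereal (2 * lam n) * (ext_integral M (\<lambda>e. f e (x n \<omega>)) - ext_integral M (\<lambda>e. f e (y \<omega>)))
               + ereal (4 * (lam n)\<^sup>2 * (\<integral>e. (L e)\<^sup>2 \<partial>M))) \<and>
         ((AE \<omega> in P. y \<omega> \<in> argmin_set (\<lambda>z. ext_integral M (\<lambda>e. f e z))) \<longrightarrow>
          (AE \<omega> in P.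
            enn2ereal (nn_cond_exp P (nat_filtration P M \<xi> n)
                         (\<lambda>\<omega>'. ennreal ((dist (x (Suc n) \<omega>') (y \<omega>'))\<^sup>2)) \<omega>)
            \<le> ereal ((dist (x n \<omega>) (y \<omega>))\<^sup>2)
               - ereal (2 * lam n) * (ext_integral M (\<lambda>e. f e (x n \<omega>))
                                       - (INF z. ext_integral M (\<lambda>e. f e z)))
               + ereal (4 * (lam n)\<^sup>2 * (\<integral>e. (L e)\<^sup>2 \<partial>M))))"
    (is "?estimate \<and> (?minimiser \<longrightarrow> ?estimate_min)")
proof (intro conjI impI)
  note step = nn_cond_exp_dist_step_le[OF y]
  then show ?estimate
    by (rule eventually_mono) (simp add: ext_integral_f)
  assume ?minimiser
  with step show ?estimate_min
  proof eventually_elim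
    case (elim \<omega>)
    have "(INF z. ext_integral M (\<lambda>e. f e z)) = ext_integral M (\<lambda>e. f e (y \<omega>))"
      using elim(2) unfolding argmin_set_def by (intro antisym INF_lower INF_greatest) auto
    with elim(1) show ?case by (simp add: ext_integral_f)
  qed
qed

end

theorem lemma5p3:
  fixes M :: "'e measure" and P :: "'w measure"
    and f :: "'e \<Rightarrow> 'x::metric_space \<Rightarrow> ereal"
    and x0 :: 'x and lam :: "nat \<Rightarrow> real"
    and \<xi> :: "nat \<Rightarrow> 'w \<Rightarrow> 'e" and x :: "nat \<Rightarrow> 'w \<Rightarrow> 'x"
    and L :: "'e \<Rightarrow> real"
  assumes M_prob: "prob_space M" and M_complete: "complete_measure M"
    and P_prob: "prob_space P"
    and X_hadamard: "hadamard_space TYPE('x)" and X_separable: "separable_space TYPE('x)"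
    and f_nci: "normal_convex_integrand M f"
    and fbar_proper: "proper_fun (\<lambda>z. ext_integral M (\<lambda>e. f e z))"
    and fbar_argmin: "argmin_set (\<lambda>z. ext_integral M (\<lambda>e. f e z)) \<noteq> {}"
    and lam_pos: "\<And>n. lam n > 0"
    and lam_sum: "\<not> summable lam"
    and lam_sq_sum: "summable (\<lambda>n. (lam n)\<^sup>2)"
    and \<xi>_indep: "prob_space.indep_vars P (\<lambda>_. M) \<xi> {1..}"
    and \<xi>_distr: "\<And>i. i \<ge> 1 \<Longrightarrow> \<xi> i \<in> measurable P M \<and> distr P M (\<xi> i) = M"
    and x_0: "\<And>\<omega>. x 0 \<omega> = x0"
    and x_Suc: "\<And>n \<omega>. x (Suc n) \<omega> \<in> prox f (lam n) (\<xi> (Suc n) \<omega>) (x n \<omega>)"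
    and L_meas: "L \<in> borel_measurable M"
    and L_pos: "\<And>e. e \<in> space M \<Longrightarrow> L e > 0"
    and L_sq_int: "integrable M (\<lambda>e. (L e)\<^sup>2)"
    and L_lip: "AE e in M. \<forall>u v. f e u - f e v \<le> ereal (L e * dist u v)"
  shows "\<forall>n (y :: 'w \<Rightarrow> 'x).
           y \<in> measurable (nat_filtration P M \<xi> n) borel \<longrightarrow>
           (AE \<omega> in P.
              enn2ereal (nn_cond_exp P (nat_filtration P M \<xi> n)
                           (\<lambda>\<omega>'. ennreal ((dist (x (Suc n) \<omega>') (y \<omega>'))\<^sup>2)) \<omega>)
              \<le> ereal ((dist (x n \<omega>) (y \<omega>))\<^sup>2)
                 - ereal (2 * lam n) * (ext_integral M (\<lambda>e. f e (x n \<omega>)) - ext_integral M (\<lambda>e. f e (y \<omega>)))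
                 + ereal (4 * (lam n)\<^sup>2 * (\<integral>e. (L e)\<^sup>2 \<partial>M))) \<and>
           ((AE \<omega> in P. y \<omega> \<in> argmin_set (\<lambda>z. ext_integral M (\<lambda>e. f e z))) \<longrightarrow>
            (AE \<omega> in P.
              enn2ereal (nn_cond_exp P (nat_filtration P M \<xi> n)
                           (\<lambda>\<omega>'. ennreal ((dist (x (Suc n) \<omega>') (y \<omega>'))\<^sup>2)) \<omega>)
              \<le> ereal ((dist (x n \<omega>) (y \<omega>))\<^sup>2)
                 - ereal (2 * lam n) * (ext_integral M (\<lambda>e. f e (x n \<omega>))
                                         - (INF z. ext_integral M (\<lambda>e. f e z)))
                 + ereal (4 * (lam n)\<^sup>2 * (\<integral>e. (L e)\<^sup>2 \<partial>M))))"
proof -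
  \<comment> \<open>The conditions on the step sizes and the existence of a minimiser only matter for the
    convergence of the iteration, not for a single step.\<close>
  have "x 0 = (\<lambda>_. x0)" using x_0 by (simp add: fun_eq_iff)
  then have x_0_measurable: "x 0 \<in> borel_measurable (nat_filtration P M \<xi> 0)" by simp
  have L_nonneg: "\<And>e. e \<in> space M \<Longrightarrow> 0 \<le> L e" using L_pos by (simp add: less_imp_le)
  interpret stochastic_proximal_iteration M P f lam \<xi> x L
    using M_prob M_complete P_prob X_hadamard X_separable f_nci fbar_proper lam_pos \<xi>_indep \<xi>_distr
      x_0_measurable x_Suc L_meas L_nonneg L_sq_int L_lip
    by (rule stochastic_proximal_iteration.intro)
  show ?thesis
    by (intro allI impI one_step_estimate)
qed

end
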